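(* Let $q$ be a query over ordered databases that is computable in (first-order uniform) $\mathrm{AC}^1$, and let $\Delta$ be a finite set of parameter-free first-order replacement queries. Then $(q,\Delta)$ is in DynFO with suitable initialization.
   Context: Framework. A schema $\tau$ consists of relation symbols with arities and constant symbols; a database over $\tau$ with a finite domain $D$ interprets them. A replacement rule for a relation symbol $R$ is $R := \mu_R(\bar p;\bar x)$, where $\mu_R$ is a first-order formula over $\tau$, $\bar x$ has the arity of $R$, and $\bar p$ is a tuple of parameter variables. A replacement query $\rho(\bar p)$ is a set of replacement rules for distinct relation symbols, all with the same parameter tuple $\bar p$; it is parameter-free if $\bar p$ is empty. A change $\delta=\rho(\bar a)$ consists of a replacement query $\rho$ and a tuple $\bar a$ of domain elements of the arity of $\bar p$; $\delta(\mathcal D)$ is obtained from $\mathcal D$ by replacing every relation $R$ having a rule in $\rho$ by $\{\bar b : \mathcal D\models \mu_R(\bar a;\bar b)\}$. A dynamic program with input schema $\tau_{in}$ and auxiliary schema $\tau_{aux}$ operates on states $(D,\mathcal I,\mathcal A)$ consisting of an input database $\mathcal I$ and an auxiliary database $\mathcal A$ over a common fixed finite domain $D$. For every allowed replacement query $\rho(\bar p)$ and every auxiliary symbol $T$ it has an update formula $\varphi_T(\bar p;\bar x)$ over $\tau_{in}\cup\tau_{aux}$. On a change $\delta=\rho(\bar a)$ the new state has input $\delta(\mathcal I)$ and each $T$ becomes $\{\bar b : (\mathcal I,\mathcal A)\models\varphi_T(\bar a,\bar b)\}$, evaluated in the old state. A dynamic query is a pair $(q,\Delta)$. A program maintains $(q,\Delta)$,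 $q$ of arity $k$, if it has a $k$-ary auxiliary relation $Q$ such that for every domain, starting from the initial (empty) input database, after every nonempty sequence $\alpha$ of changes from $\Delta$ the relation $Q$ equals $q$ of the current input database. DynFO is the class of dynamic queries maintainable with first-order update formulas. "With suitable initialization" means that the initial auxiliary database need not be empty but may be chosen as a suitable auxiliary database depending on the initial input (all initializations used are computable in polynomial time). An ordered database contains a built-in linear order $\le$ on its domain which is never modified by changes. $\mathrm{AC}^1$ is the class of problems decided by first-order uniform families of circuits of polynomial size and depth $O(\log n)$ with unbounded fan-in AND, OR and NOT gates. *)

theory Defs
  imports Complex_Main
begin

text \<open>An ordered database with n elements has domain {0..<n}; its built-in linear
order is the order of the naturals.
BIT is only permitted in the uniformity formulas of circuit families.\<close>

datatype trm = V nat | C nat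

datatype 'r fo =
    FRel 'r "trm list"
  | FEq trm trm
  | FLe trm trm
  | FBit trm trm
  | FNot "'r fo"
  | FAnd "'r fo" "'r fo"
  | FEx nat "'r fo"

fun teval :: "(nat \<Rightarrow> nat) \<Rightarrow> (nat \<Rightarrow> nat) \<Rightarrow> trm \<Rightarrow> nat" where
  "teval c \<sigma> (V i) = \<sigma> i"
| "teval c \<sigma> (C k) = c k"

fun sat :: "nat \<Rightarrow> ('r \<Rightarrow> nat list set) \<Rightarrow> (nat \<Rightarrow> nat) \<Rightarrow> (nat \<Rightarrow> nat) \<Rightarrow> 'r fo \<Rightarrow> bool" where
  "sat n I c \<sigma> (FRel R ts) = (map (teval c \<sigma>) ts \<in> I R)"
| "sat n I c \<sigma> (FEq t1 t2) = (teval c \<sigma> t1 = teval c \<sigma> t2)"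
| "sat n I c \<sigma> (FLe t1 t2) = (teval c \<sigma> t1 \<le> teval c \<sigma> t2)"
| "sat n I c \<sigma> (FBit t1 t2) = bit (teval c \<sigma> t1) (teval c \<sigma> t2)"
| "sat n I c \<sigma> (FNot \<phi>) = (\<not> sat n I c \<sigma> \<phi>)"
| "sat n I c \<sigma> (FAnd \<phi> \<psi>) = (sat n I c \<sigma> \<phi> \<and> sat n I c \<sigma> \<psi>)"
| "sat n I c \<sigma> (FEx x \<phi>) = (\<exists>a<n. sat n I c (\<sigma>(x := a)) \<phi>)"

fun tvars :: "trm \<Rightarrow> nat set" where
  "tvars (V i) = {i}"
| "tvars (C k) = {}"

fun fvs :: "'r fo \<Rightarrow> nat set" where
  "fvs (FRel R ts) = (\<Union>t\<in>set ts. tvars t)"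
| "fvs (FEq t1 t2) = tvars t1 \<union> tvars t2"
| "fvs (FLe t1 t2) = tvars t1 \<union> tvars t2"
| "fvs (FBit t1 t2) = tvars t1 \<union> tvars t2"
| "fvs (FNot \<phi>) = fvs \<phi>"
| "fvs (FAnd \<phi> \<psi>) = fvs \<phi> \<union> fvs \<psi>"
| "fvs (FEx x \<phi>) = fvs \<phi> - {x}"

fun trm_ok :: "nat set \<Rightarrow> trm \<Rightarrow> bool" where
  "trm_ok cs (V i) = True"
| "trm_ok cs (C k) = (k \<in> cs)"

fun fo_wf :: "('r \<rightharpoonup> nat) \<Rightarrow> nat set \<Rightarrow> bool \<Rightarrow> 'r fo \<Rightarrow> bool" where
  "fo_wf ar cs b (FRel R ts) = (ar R = Some (length ts) \<and> (\<forall>t\<in>set ts. trm_ok cs t))"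
| "fo_wf ar cs b (FEq t1 t2) = (trm_ok cs t1 \<and> trm_ok cs t2)"
| "fo_wf ar cs b (FLe t1 t2) = (trm_ok cs t1 \<and> trm_ok cs t2)"
| "fo_wf ar cs b (FBit t1 t2) = (b \<and> trm_ok cs t1 \<and> trm_ok cs t2)"
| "fo_wf ar cs b (FNot \<phi>) = fo_wf ar cs b \<phi>"
| "fo_wf ar cs b (FAnd \<phi> \<psi>) = (fo_wf ar cs b \<phi> \<and> fo_wf ar cs b \<psi>)"
| "fo_wf ar cs b (FEx x \<phi>) = fo_wf ar cs b \<phi>"

record schema =
  srel :: "nat \<rightharpoonup> nat"
  scst :: "nat set"

definition schema_ok :: "schema \<Rightarrow> bool" where
  "schema_ok S \<longleftrightarrow> finite (dom (srel S)) \<and> finite (scst S)"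

definition tuples :: "nat \<Rightarrow> nat \<Rightarrow> nat list set" where
  "tuples n r = {t. length t = r \<and> set t \<subseteq> {..<n}}"

definition is_db :: "schema \<Rightarrow> nat \<Rightarrow> (nat \<Rightarrow> nat list set) \<Rightarrow> (nat \<Rightarrow> nat) \<Rightarrow> bool" where
  "is_db S n I c \<longleftrightarrow>
     (\<forall>R. case srel S R of None \<Rightarrow> I R = {} | Some r \<Rightarrow> I R \<subseteq> tuples n r)
   \<and> (\<forall>k\<in>scst S. c k < n)"

text \<open>A replacement query with rpar parameters; the rule for R is a formula
\<mu>_R(p_0..p_{l-1}; x_0..x_{r-1}) whose variables are numbered: parameters are
variables 0..<l and the tuple variables are l..<l+r.\<close>
record rq =
  rpar :: nat
  rrules :: "nat \<rightharpoonup> nat fo"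

definition rq_ok :: "schema \<Rightarrow> rq \<Rightarrow> bool" where
  "rq_ok S \<rho> \<longleftrightarrow> (\<forall>R \<mu>. rrules \<rho> R = Some \<mu> \<longrightarrow>
      (\<exists>r. srel S R = Some r \<and> fo_wf (srel S) (scst S) False \<mu> \<and> fvs \<mu> \<subseteq> {..< rpar \<rho> + r}))"

definition apply_rq :: "schema \<Rightarrow> nat \<Rightarrow> (nat \<Rightarrow> nat list set) \<Rightarrow> (nat \<Rightarrow> nat)
    \<Rightarrow> rq \<Rightarrow> nat list \<Rightarrow> (nat \<Rightarrow> nat list set)" where
  "apply_rq S n I c \<rho> a = (\<lambda>R. case rrules \<rho> R of
      None \<Rightarrow> I R
    | Some \<mu> \<Rightarrow> {b \<in> tuples n (the (srel S R)). sat n I c (\<lambda>i. (a @ b) ! i) \<mu>})"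

text \<open>Auxiliary relation symbols are naturals; formulas of the program use
relation symbols Inl R (input) and Inr T (auxiliary).\<close>
record dynprog =
  auxar :: "nat \<rightharpoonup> nat"
  upd :: "rq \<Rightarrow> nat \<Rightarrow> (nat + nat) fo"
  qsym :: nat

definition prog_ok :: "schema \<Rightarrow> nat \<Rightarrow> rq set \<Rightarrow> dynprog \<Rightarrow> bool" where
  "prog_ok S k \<Delta> P \<longleftrightarrow> finite (dom (auxar P)) \<and> auxar P (qsym P) = Some k \<and>
     (\<forall>\<rho>\<in>\<Delta>. \<forall>T r. auxar P T = Some r \<longrightarrow>
        fo_wf (case_sum (srel S) (auxar P)) (scst S) False (upd P \<rho> T)
      \<and> fvs (upd P \<rho> T) \<subseteq> {..< rpar \<rho> + r})"

definition step :: "schema \<Rightarrow> dynprog \<Rightarrow> nat \<Rightarrow> (nat \<Rightarrow> nat) \<Rightarrow> rq \<times> nat list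
    \<Rightarrow> (nat \<Rightarrow> nat list set) \<times> (nat \<Rightarrow> nat list set)
    \<Rightarrow> (nat \<Rightarrow> nat list set) \<times> (nat \<Rightarrow> nat list set)" where
  "step S P n c ch st = (case ch of (\<rho>, a) \<Rightarrow> case st of (I, A) \<Rightarrow>
     (apply_rq S n I c \<rho> a,
      \<lambda>T. case auxar P T of None \<Rightarrow> {}
        | Some r \<Rightarrow> {b \<in> tuples n r. sat n (case_sum I A) c (\<lambda>i. (a @ b) ! i) (upd P \<rho> T)}))"

text \<open>(q,\<Delta>) is in DynFO with suitable initialization: a first-order dynamic program
and an initialization (an auxiliary database depending on the initial, empty
input database, i.e. on n and the constants) such that after every nonempty
change sequence the designated relation equals the query result.\<close>
definition dynfo_init :: "schema \<Rightarrow> nat \<Rightarrow> (nat \<Rightarrow> (nat \<Rightarrow> nat list set) \<Rightarrow> (nat \<Rightarrow> nat) \<Rightarrow> nat list set)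
    \<Rightarrow> rq set \<Rightarrow> bool" where
  "dynfo_init S k q \<Delta> \<longleftrightarrow> (\<exists>P init. prog_ok S k \<Delta> P \<and>
     (\<forall>n>0. \<forall>c. (\<forall>j\<in>scst S. c j < n) \<longrightarrow>
       (\<forall>\<alpha>. \<alpha> \<noteq> [] \<longrightarrow> (\<forall>(\<rho>, a)\<in>set \<alpha>. \<rho> \<in> \<Delta> \<and> a \<in> tuples n (rpar \<rho>)) \<longrightarrow>
          (let st = fold (step S P n c) \<alpha> ((\<lambda>_. {}), init n c)
           in snd st (qsym P) = q n (fst st) c))))"

text \<open>A circuit family is given by an FO-interpretation over the vocabulary {=, \<le>, BIT}
on the domain {0..<n}: gates are cw-tuples; formulas define AND, OR, NOT gates
(with this priority), the wire relation (parent in variables 0..<cw, child in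
variables cw..<2cw); all other gates are input gates, whose value is the disjunction
of the input bits R(first ar(R) components) for which cin_rel R holds and
"c = first component" for which cin_cst c holds. Output gate for the answer
tuple a is a @ [0,...,0].\<close>
record circ =
  cw :: nat
  cand :: "nat fo"
  cor :: "nat fo"
  cnot :: "nat fo"
  cedge :: "nat fo"
  cin_rel :: "nat \<Rightarrow> nat fo"
  cin_cst :: "nat \<Rightarrow> nat fo"
  cdep :: real

definition usat :: "nat \<Rightarrow> nat fo \<Rightarrow> nat list \<Rightarrow> bool" where
  "usat n \<phi> x = sat n (\<lambda>_. {}) (\<lambda>_. 0) (\<lambda>i. x ! i) \<phi>"

definition cedge_holds :: "circ \<Rightarrow> nat \<Rightarrow> nat list \<Rightarrow> nat list \<Rightarrow> bool" where
  "cedge_holds Cc n x y = usat n (cedge Cc) (x @ y)"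

definition inval :: "circ \<Rightarrow> schema \<Rightarrow> nat \<Rightarrow> (nat \<Rightarrow> nat list set) \<Rightarrow> (nat \<Rightarrow> nat) \<Rightarrow> nat list \<Rightarrow> bool" where
  "inval Cc S n I c x \<longleftrightarrow>
     (\<exists>R r. srel S R = Some r \<and> usat n (cin_rel Cc R) x \<and> take r x \<in> I R)
   \<or> (\<exists>k\<in>scst S. usat n (cin_cst Cc k) x \<and> hd x = c k)"

definition gstep :: "circ \<Rightarrow> schema \<Rightarrow> nat \<Rightarrow> (nat \<Rightarrow> nat list set) \<Rightarrow> (nat \<Rightarrow> nat)
    \<Rightarrow> (nat list \<Rightarrow> bool) \<Rightarrow> nat list \<Rightarrow> bool" where
  "gstep Cc S n I c prev x =
    (if usat n (cand Cc) x then (\<forall>y\<in>tuples n (cw Cc). cedge_holds Cc n x y \<longrightarrow> prev y)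
     else if usat n (cor Cc) x then (\<exists>y\<in>tuples n (cw Cc). cedge_holds Cc n x y \<and> prev y)
     else if usat n (cnot Cc) x then \<not> (\<exists>y\<in>tuples n (cw Cc). cedge_holds Cc n x y \<and> prev y)
     else inval Cc S n I c x)"

text \<open>Value of gate x evaluated to depth d (correct once d is at least the depth).\<close>
fun gval :: "circ \<Rightarrow> schema \<Rightarrow> nat \<Rightarrow> (nat \<Rightarrow> nat list set) \<Rightarrow> (nat \<Rightarrow> nat) \<Rightarrow> nat \<Rightarrow> nat list \<Rightarrow> bool" where
  "gval Cc S n I c 0 x = gstep Cc S n I c (\<lambda>_. False) x"
| "gval Cc S n I c (Suc d) x = gstep Cc S n I c (gval Cc S n I c d) x"

definition dbound :: "circ \<Rightarrow> nat \<Rightarrow> nat" where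
  "dbound Cc n = nat \<lceil>cdep Cc * (log 2 (real n) + 1)\<rceil>"

definition circ_ok :: "schema \<Rightarrow> nat \<Rightarrow> circ \<Rightarrow> bool" where
  "circ_ok S k Cc \<longleftrightarrow>
     1 \<le> cw Cc \<and> k \<le> cw Cc \<and> (\<forall>R r. srel S R = Some r \<longrightarrow> r \<le> cw Cc)
   \<and> (\<forall>\<phi>\<in>{cand Cc, cor Cc, cnot Cc} \<union> range (cin_rel Cc) \<union> range (cin_cst Cc).
        fo_wf Map.empty {} True \<phi> \<and> fvs \<phi> \<subseteq> {..< cw Cc})
   \<and> fo_wf Map.empty {} True (cedge Cc) \<and> fvs (cedge Cc) \<subseteq> {..< 2 * cw Cc}
   \<comment> \<open>NOT gates have fan-in exactly one\<close>
   \<and> (\<forall>n>0. \<forall>x\<in>tuples n (cw Cc).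
        \<not> usat n (cand Cc) x \<and> \<not> usat n (cor Cc) x \<and> usat n (cnot Cc) x \<longrightarrow>
        (\<exists>!y. y \<in> tuples n (cw Cc) \<and> cedge_holds Cc n x y))
   \<comment> \<open>depth O(log n): every wire path has length at most cdep * (log2 n + 1)\<close>
   \<and> (\<forall>n>0. \<forall>g L. (\<forall>i\<le>L. g i \<in> tuples n (cw Cc)) \<and> (\<forall>i<L. cedge_holds Cc n (g i) (g (Suc i)))
        \<longrightarrow> real L \<le> cdep Cc * (log 2 (real n) + 1))"

definition AC1_query :: "schema \<Rightarrow> nat \<Rightarrow> (nat \<Rightarrow> (nat \<Rightarrow> nat list set) \<Rightarrow> (nat \<Rightarrow> nat) \<Rightarrow> nat list set) \<Rightarrow> bool" where
  "AC1_query S k q \<longleftrightarrow> (\<exists>Cc. circ_ok S k Cc \<and>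
     (\<forall>n>0. \<forall>I c. is_db S n I c \<longrightarrow>
        q n I c = {a \<in> tuples n k. gval Cc S n I c (dbound Cc n) (a @ replicate (cw Cc - k) 0)}))"

end

theory Submission
  imports Defs "HOL-Library.Countable" "HOL-Library.Discrete_Functions"
begin

text \<open>Let the circuit family for q have depth at most d (log n + 1) and let
  \<delta> 0, ..., \<delta> (m - 1) enumerate \<Delta>. Because the changes have no parameters, a word w over
  {0..<m} determines the database w(I) reached from the current input I by applying the
  changes of w, and w(I) after a change \<delta> a is (a w)(I) before it. The program stores, for
  every word w of length at most log n (named by an (m+1)-tuple), the database w(I) and the
  values of all gates on w(I) evaluated to depth L (log n - |w| + 1), where L is a constant
  above 2d. After \<delta> a the entry for w is obtained from the old entry for a w by L further
  circuit layers, which first-order logic can evaluate; if a w is too long, its database is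
  one change application to the stored database of its prefix and the gates are evaluated
  from scratch to depth L. The entry for the empty word has depth L (log n + 1), beyond
  the circuit depth, so it yields q. All entries are initialised from the empty input.\<close>

section \<open>Renaming and congruence for first-order formulas\<close>

fun trm_rename :: "(nat \<Rightarrow> nat) \<Rightarrow> trm \<Rightarrow> trm" where
  "trm_rename f (V i) = V (f i)" | "trm_rename f (C k) = C k"

fun fo_rename :: "(nat \<Rightarrow> nat) \<Rightarrow> 'r fo \<Rightarrow> 'r fo" where
  "fo_rename f (FRel R ts) = FRel R (map (trm_rename f) ts)"
| "fo_rename f (FEq t1 t2) = FEq (trm_rename f t1) (trm_rename f t2)"
| "fo_rename f (FLe t1 t2) = FLe (trm_rename f t1) (trm_rename f t2)"
| "fo_rename f (FBit t1 t2) = FBit (trm_rename f t1) (trm_rename f t2)"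
| "fo_rename f (FNot \<phi>) = FNot (fo_rename f \<phi>)"
| "fo_rename f (FAnd \<phi> \<psi>) = FAnd (fo_rename f \<phi>) (fo_rename f \<psi>)"
| "fo_rename f (FEx x \<phi>) = FEx (f x) (fo_rename f \<phi>)"

lemma teval_trm_rename: "teval c \<sigma> (trm_rename f t) = teval c (\<sigma> \<circ> f) t"
  by (cases t) auto

lemma sat_fo_rename: "inj f \<Longrightarrow> sat n I c \<sigma> (fo_rename f \<phi>) = sat n I c (\<sigma> \<circ> f) \<phi>"
proof (induction \<phi> arbitrary: \<sigma>)
  case (FRel R ts) then show ?case by (simp add: teval_trm_rename comp_def)
next
  case (FEx x \<phi>)
  have eq: "\<And>a. (\<sigma>(f x := a)) \<circ> f = (\<sigma> \<circ> f)(x := a)"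
    using FEx.prems by (auto simp: fun_eq_iff inj_eq)
  show ?case by (simp only: fo_rename.simps sat.simps FEx.IH[OF FEx.prems] eq)
qed (auto simp: teval_trm_rename)

lemma tvars_trm_rename: "tvars (trm_rename f t) = f ` tvars t" by (cases t) auto

lemma fvs_fo_rename: "inj f \<Longrightarrow> fvs (fo_rename f \<phi>) = f ` fvs \<phi>"
  by (induction \<phi>) (auto simp: tvars_trm_rename image_Un image_set_diff)

lemma trm_ok_trm_rename: "trm_ok cs (trm_rename f t) = trm_ok cs t" by (cases t) auto

lemma fo_wf_fo_rename: "fo_wf ar cs b (fo_rename f \<phi>) = fo_wf ar cs b \<phi>"
  by (induction \<phi>) (auto simp: trm_ok_trm_rename)

lemma teval_cong: "(\<forall>i\<in>tvars t. \<sigma> i = \<sigma>' i) \<Longrightarrow> teval c \<sigma> t = teval c \<sigma>' t"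
  by (cases t) auto

lemma sat_cong: "(\<forall>i\<in>fvs \<phi>. \<sigma> i = \<sigma>' i) \<Longrightarrow> sat n I c \<sigma> \<phi> = sat n I c \<sigma>' \<phi>"
proof (induction \<phi> arbitrary: \<sigma> \<sigma>')
  case (FRel R ts)
  then have "map (teval c \<sigma>) ts = map (teval c \<sigma>') ts"
    by (intro map_cong refl teval_cong) auto
  then show ?case by (metis sat.simps(1))
next
  case (FEq t1 t2) then show ?case using teval_cong[of t1 \<sigma> \<sigma>' c] teval_cong[of t2 \<sigma> \<sigma>' c] by auto
next
  case (FLe t1 t2) then show ?case using teval_cong[of t1 \<sigma> \<sigma>' c] teval_cong[of t2 \<sigma> \<sigma>' c] by auto
next
  case (FBit t1 t2) then show ?case using teval_cong[of t1 \<sigma> \<sigma>' c] teval_cong[of t2 \<sigma> \<sigma>' c] by auto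
next
  case (FNot \<phi>) then show ?case by simp
next
  case (FAnd \<phi> \<psi>)
  have "sat n I c \<sigma> \<phi> = sat n I c \<sigma>' \<phi>" by (rule FAnd.IH(1)) (use FAnd.prems in auto)
  moreover have "sat n I c \<sigma> \<psi> = sat n I c \<sigma>' \<psi>" by (rule FAnd.IH(2)) (use FAnd.prems in auto)
  ultimately show ?case by simp
next
  case (FEx x \<phi>)
  have "\<And>a. sat n I c (\<sigma>(x:=a)) \<phi> = sat n I c (\<sigma>'(x:=a)) \<phi>"
    by (rule FEx.IH) (use FEx.prems in auto)
  then show ?case by simp
qed

lemma sat_cong_interp: "fo_wf ar cs b \<phi> \<Longrightarrow> (\<forall>R. ar R \<noteq> None \<longrightarrow> I R = I' R) \<Longrightarrow> sat n I c \<sigma> \<phi> = sat n I' c \<sigma> \<phi>"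
  by (induction \<phi> arbitrary: \<sigma>) auto

lemma teval_cong_consts: "trm_ok {} t \<Longrightarrow> teval c \<sigma> t = teval c' \<sigma> t"
  by (cases t) auto

lemma sat_cong_consts: "fo_wf ar {} b \<phi> \<Longrightarrow> sat n I c \<sigma> \<phi> = sat n I c' \<sigma> \<phi>"
proof (induction \<phi> arbitrary: \<sigma>)
  case (FRel R ts)
  then have "map (teval c \<sigma>) ts = map (teval c' \<sigma>) ts"
    by (intro map_cong refl teval_cong_consts) auto
  then show ?case by (metis sat.simps(1))
qed (auto simp: teval_cong_consts[of _ c _ c'])

section \<open>First-order definable predicates\<close>

text \<open>Defining formulas are BIT-free: in DynFO programs BIT is not available, only in the
  uniformity formulas of circuits.\<close>

definition fo_definable :: "('r \<rightharpoonup> nat) \<Rightarrow> nat set \<Rightarrow> (nat \<Rightarrow> ('r \<Rightarrow> nat list set) \<Rightarrow> (nat \<Rightarrow> nat) \<Rightarrow> bool)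
   \<Rightarrow> nat \<Rightarrow> (nat \<Rightarrow> ('r \<Rightarrow> nat list set) \<Rightarrow> (nat \<Rightarrow> nat) \<Rightarrow> nat list \<Rightarrow> bool) \<Rightarrow> bool" where
  "fo_definable ar cs Vp r F \<longleftrightarrow> (\<exists>\<phi>. fo_wf ar cs False \<phi> \<and> fvs \<phi> \<subseteq> {..<r} \<and>
     (\<forall>n J c x. Vp n J c \<longrightarrow> 0 < n \<longrightarrow> (\<forall>k\<in>cs. c k < n) \<longrightarrow> length x = r \<longrightarrow> set x \<subseteq> {..<n} \<longrightarrow>
        sat n J c (\<lambda>i. x ! i) \<phi> = F n J c x))"

lemma fo_definableI:
  assumes "fo_wf ar cs False \<phi>" "fvs \<phi> \<subseteq> {..<r}"
    and "\<And>n J c x. Vp n J c \<Longrightarrow> 0 < n \<Longrightarrow> \<forall>k\<in>cs. c k < n \<Longrightarrow> length x = r \<Longrightarrow> set x \<subseteq> {..<n} \<Longrightarrow>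
        sat n J c (\<lambda>i. x ! i) \<phi> = F n J c x"
  shows "fo_definable ar cs Vp r F"
  using assms unfolding fo_definable_def by blast

lemma fo_definableE:
  assumes "fo_definable ar cs Vp r F"
  obtains \<phi> where "fo_wf ar cs False \<phi>" "fvs \<phi> \<subseteq> {..<r}"
    "\<And>n J c x. Vp n J c \<Longrightarrow> 0 < n \<Longrightarrow> \<forall>k\<in>cs. c k < n \<Longrightarrow> length x = r \<Longrightarrow> set x \<subseteq> {..<n} \<Longrightarrow>
        sat n J c (\<lambda>i. x ! i) \<phi> = F n J c x"
  using assms unfolding fo_definable_def by blast

lemma fo_definable_cong:
  assumes "fo_definable ar cs Vp r F"
    and "\<And>n J c x. Vp n J c \<Longrightarrow> 0 < n \<Longrightarrow> \<forall>k\<in>cs. c k < n \<Longrightarrow> length x = r \<Longrightarrow> set x \<subseteq> {..<n} \<Longrightarrow>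
        F n J c x = G n J c x"
  shows "fo_definable ar cs Vp r G"
  using assms unfolding fo_definable_def by metis

lemma fo_definable_true: "fo_definable ar cs Vp r (\<lambda>n J c x. True)"
  by (rule fo_definableI[where \<phi>="FEx 0 (FEq (V 0) (V 0))"]) auto

lemma fo_definable_not: "fo_definable ar cs Vp r F \<Longrightarrow> fo_definable ar cs Vp r (\<lambda>n J c x. \<not> F n J c x)"
  by (erule fo_definableE, rule_tac \<phi>="FNot \<phi>" in fo_definableI) auto

lemma fo_definable_and: "fo_definable ar cs Vp r F \<Longrightarrow> fo_definable ar cs Vp r G \<Longrightarrow> fo_definable ar cs Vp r (\<lambda>n J c x. F n J c x \<and> G n J c x)"
  by (erule fo_definableE, erule fo_definableE, rule_tac \<phi>="FAnd \<phi> \<phi>'" in fo_definableI) auto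

lemma fo_definable_or: "fo_definable ar cs Vp r F \<Longrightarrow> fo_definable ar cs Vp r G \<Longrightarrow> fo_definable ar cs Vp r (\<lambda>n J c x. F n J c x \<or> G n J c x)"
  by (drule fo_definable_not, drule fo_definable_not, drule (1) fo_definable_and, drule fo_definable_not) simp

lemma fo_definable_imp: "fo_definable ar cs Vp r F \<Longrightarrow> fo_definable ar cs Vp r G \<Longrightarrow> fo_definable ar cs Vp r (\<lambda>n J c x. F n J c x \<longrightarrow> G n J c x)"
  by (drule fo_definable_not, drule (1) fo_definable_or) simp

lemma fo_definable_false: "fo_definable ar cs Vp r (\<lambda>n J c x. False)"
  using fo_definable_not[OF fo_definable_true] by simp

lemma fo_definable_if: "fo_definable ar cs Vp r B \<Longrightarrow> fo_definable ar cs Vp r F \<Longrightarrow> fo_definable ar cs Vp r G \<Longrightarrow>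
   fo_definable ar cs Vp r (\<lambda>n J c x. if B n J c x then F n J c x else G n J c x)"
  by (frule (1) fo_definable_imp, drule fo_definable_not, drule (1) fo_definable_imp, drule (1) fo_definable_and) simp

lemma fo_definable_trm_eq:
  assumes "trm_ok cs t1" "trm_ok cs t2" "tvars t1 \<subseteq> {..<r}" "tvars t2 \<subseteq> {..<r}"
  shows "fo_definable ar cs Vp r (\<lambda>n J c x. teval c (\<lambda>i. x ! i) t1 = teval c (\<lambda>i. x ! i) t2)"
  by (rule fo_definableI[where \<phi>="FEq t1 t2"]) (use assms in auto)

lemma fo_definable_trm_le:
  assumes "trm_ok cs t1" "trm_ok cs t2" "tvars t1 \<subseteq> {..<r}" "tvars t2 \<subseteq> {..<r}"
  shows "fo_definable ar cs Vp r (\<lambda>n J c x. teval c (\<lambda>i. x ! i) t1 \<le> teval c (\<lambda>i. x ! i) t2)"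
  by (rule fo_definableI[where \<phi>="FLe t1 t2"]) (use assms in auto)

lemma fo_definable_atom:
  assumes "ar R = Some (length ts)" "\<forall>t\<in>set ts. trm_ok cs t \<and> tvars t \<subseteq> {..<r}"
  shows "fo_definable ar cs Vp r (\<lambda>n J c x. map (teval c (\<lambda>i. x ! i)) ts \<in> J R)"
  by (rule fo_definableI[where \<phi>="FRel R ts"]) (use assms in auto)

lemma fo_definable_atom_vars:
  assumes "ar R = Some (length is)" "\<forall>i\<in>set is. i < r"
  shows "fo_definable ar cs Vp r (\<lambda>n J c x. map (\<lambda>i. x ! i) is \<in> J R)"
  using fo_definable_atom[of ar R "map V is" cs r Vp] assms by (simp add: comp_def)

lemma fo_definable_var_eq: "i < r \<Longrightarrow> j < r \<Longrightarrow> fo_definable ar cs Vp r (\<lambda>n J c x. x ! i = x ! j)"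
  using fo_definable_trm_eq[of cs "V i" "V j" r] by simp

lemma fo_definable_var_le: "i < r \<Longrightarrow> j < r \<Longrightarrow> fo_definable ar cs Vp r (\<lambda>n J c x. x ! i \<le> x ! j)"
  using fo_definable_trm_le[of cs "V i" "V j" r] by simp

lemma fo_definable_var_eq_const: "i < r \<Longrightarrow> k \<in> cs \<Longrightarrow> fo_definable ar cs Vp r (\<lambda>n J c x. x ! i = c k)"
  using fo_definable_trm_eq[of cs "V i" "C k" r] by simp

lemma fo_definable_ex:
  assumes "fo_definable ar cs Vp (Suc r) F"
  shows "fo_definable ar cs Vp r (\<lambda>n J c x. \<exists>a<n. F n J c (x @ [a]))"
proof -
  obtain \<phi> where \<phi>: "fo_wf ar cs False \<phi>" "fvs \<phi> \<subseteq> {..<Suc r}"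
    "\<forall>n J c x. Vp n J c \<longrightarrow> 0 < n \<longrightarrow> (\<forall>k\<in>cs. c k < n) \<longrightarrow> length x = Suc r \<longrightarrow> set x \<subseteq> {..<n} \<longrightarrow>
        sat n J c (\<lambda>i. x ! i) \<phi> = F n J c x"
    using assms unfolding fo_definable_def by blast
  show ?thesis
  proof (rule fo_definableI[where \<phi>="FEx r \<phi>"])
    show "fvs (FEx r \<phi>) \<subseteq> {..<r}" using \<phi>(2) by auto
    fix n J c x assume h: "Vp n J c" "0 < n" "\<forall>k\<in>cs. c k < n" "length x = r" "set x \<subseteq> {..<n}"
    have "\<And>a. sat n J c ((\<lambda>i. x ! i)(r := a)) \<phi> = sat n J c (\<lambda>i. (x @ [a]) ! i) \<phi>"
      by (rule sat_cong) (use \<phi>(2) h(4) in \<open>auto simp: nth_append less_Suc_eq\<close>)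
    moreover have "\<And>a. a < n \<Longrightarrow> sat n J c (\<lambda>i. (x @ [a]) ! i) \<phi> = F n J c (x @ [a])"
      using h \<phi>(3) by auto
    ultimately show "sat n J c (\<lambda>i. x ! i) (FEx r \<phi>) = (\<exists>a<n. F n J c (x @ [a]))" by auto
  qed (use \<phi> in auto)
qed

lemma fo_definable_ex_tuple:
  "fo_definable ar cs Vp (r + j) F \<Longrightarrow>
   fo_definable ar cs Vp r (\<lambda>n J c x. \<exists>z. length z = j \<and> set z \<subseteq> {..<n} \<and> F n J c (x @ z))"
proof (induction j arbitrary: r F)
  case 0 then show ?case by (simp cong: conj_cong)
next
  case (Suc j)
  have "fo_definable ar cs Vp (Suc r + j) F" using Suc.prems by simp
  from fo_definable_ex[OF Suc.IH[OF this]]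
  have "fo_definable ar cs Vp r (\<lambda>n J c x. \<exists>a<n. \<exists>z. length z = j \<and> set z \<subseteq> {..<n} \<and> F n J c (x @ [a] @ z))"
    by simp
  then show ?case
  proof (rule fo_definable_cong, goal_cases)
    case (1 n J c x)
    show ?case (is "?L \<longleftrightarrow> ?R")
    proof
      assume ?L
      then obtain a z where "a < n" "length z = j" "set z \<subseteq> {..<n}" "F n J c (x @ [a] @ z)" by blast
      then show ?R by (intro exI[of _ "a # z"]) auto
    next
      assume ?R
      then obtain z where z: "length z = Suc j" "set z \<subseteq> {..<n}" "F n J c (x @ z)" by blast
      then obtain a z' where "z = a # z'" by (cases z) auto
      with z show ?L by (intro exI[of _ a] conjI exI[of _ z']) auto
    qed
  qed
qed

lemma fo_definable_all:
  assumes "fo_definable ar cs Vp (Suc r) F"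
  shows "fo_definable ar cs Vp r (\<lambda>n J c x. \<forall>a<n. F n J c (x @ [a]))"
  using fo_definable_not[OF fo_definable_ex[OF fo_definable_not[OF assms]]] by simp

lemma fo_definable_ball_list:
  "(\<forall>i\<in>set is. fo_definable ar cs Vp r (F i)) \<Longrightarrow> fo_definable ar cs Vp r (\<lambda>n J c x. \<forall>i\<in>set is. F i n J c x)"
proof (induction "is")
  case Nil then show ?case using fo_definable_true by simp
next
  case (Cons a "is") then show ?case using fo_definable_and[of ar cs Vp r "F a"] by simp
qed

lemma fo_definable_ball_finite:
  assumes "finite A" "\<forall>i\<in>A. fo_definable ar cs Vp r (F i)"
  shows "fo_definable ar cs Vp r (\<lambda>n J c x. \<forall>i\<in>A. F i n J c x)"
proof -
  obtain xs where "set xs = A" using finite_list[OF assms(1)] by blast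
  then show ?thesis using fo_definable_ball_list[of xs ar cs Vp r F] assms by simp
qed

lemma fo_definable_bex_finite:
  assumes "finite A" "\<forall>i\<in>A. fo_definable ar cs Vp r (F i)"
  shows "fo_definable ar cs Vp r (\<lambda>n J c x. \<exists>i\<in>A. F i n J c x)"
  using fo_definable_not[OF fo_definable_ball_finite[OF assms(1), of ar cs Vp r "\<lambda>i n J c x. \<not> F i n J c x"]] assms(2)
  by (simp add: fo_definable_not)

lemma fo_definable_drop:
  assumes "fo_definable ar cs Vp r F"
  shows "fo_definable ar cs Vp (d + r) (\<lambda>n J c x. F n J c (drop d x))"
proof -
  obtain \<phi> where \<phi>: "fo_wf ar cs False \<phi>" "fvs \<phi> \<subseteq> {..<r}"
    "\<forall>n J c x. Vp n J c \<longrightarrow> 0 < n \<longrightarrow> (\<forall>k\<in>cs. c k < n) \<longrightarrow> length x = r \<longrightarrow> set x \<subseteq> {..<n} \<longrightarrow>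
        sat n J c (\<lambda>i. x ! i) \<phi> = F n J c x"
    using assms unfolding fo_definable_def by blast
  have inj: "inj ((+) d)" by (simp add: inj_def)
  show ?thesis
  proof (rule fo_definableI[where \<phi>="fo_rename ((+) d) \<phi>"])
    show "fo_wf ar cs False (fo_rename ((+) d) \<phi>)" using \<phi>(1) by (simp add: fo_wf_fo_rename)
    show "fvs (fo_rename ((+) d) \<phi>) \<subseteq> {..<d + r}" using \<phi>(2) by (auto simp: fvs_fo_rename[OF inj])
    fix n J c x assume h: "Vp n J c" "0 < n" "\<forall>k\<in>cs. c k < n" "length x = d + r" "set x \<subseteq> {..<n}"
    have "sat n J c (\<lambda>i. x ! i) (fo_rename ((+) d) \<phi>) = sat n J c (\<lambda>i. drop d x ! i) \<phi>"
      using h(4) by (simp add: sat_fo_rename[OF inj] comp_def)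
    also have "\<dots> = F n J c (drop d x)"
      using h \<phi>(3) set_drop_subset[of d x] by (simp del: nth_drop)
    finally show "sat n J c (\<lambda>i. x ! i) (fo_rename ((+) d) \<phi>) = F n J c (drop d x)" .
  qed
qed

lemma fo_definable_reindex:
  assumes "fo_definable ar cs Vp r F" "\<forall>i<r. f i < r'"
  shows "fo_definable ar cs Vp r' (\<lambda>n J c x. F n J c (map (\<lambda>i. x ! f i) [0..<r]))"
proof -
  have a: "fo_definable ar cs Vp (r' + r) (\<lambda>n J c x. F n J c (drop r' x))"
    using fo_definable_drop[OF assms(1)] .
  have b: "fo_definable ar cs Vp (r' + r) (\<lambda>n J c x. \<forall>i\<in>set [0..<r]. x ! (r' + i) = x ! f i)"
    by (rule fo_definable_ball_list) (use assms(2) in \<open>auto intro!: fo_definable_var_eq\<close>)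
  from fo_definable_ex_tuple[OF fo_definable_and[OF b a]]
  show ?thesis
  proof (rule fo_definable_cong, goal_cases)
    case (1 n J c x)
    show ?case (is "?L \<longleftrightarrow> ?R")
    proof
      assume ?L
      then obtain z where z: "length z = r" "\<forall>i<r. z ! i = x ! f i" "F n J c z"
        using 1(4) assms(2) by (auto simp: nth_append)
      have "z = map (\<lambda>i. x ! f i) [0..<r]" using z by (intro nth_equalityI) auto
      then show ?R using z by simp
    next
      assume ?R
      then show ?L using 1(4,5) assms(2) by (intro exI[of _ "map (\<lambda>i. x ! f i) [0..<r]"])
          (auto simp: nth_append intro!: subsetD[OF 1(5)] nth_mem)
    qed
  qed
qed

lemma teval_trm_rename_add: "teval c \<sigma> (trm_rename ((+) p) t) = teval c (\<lambda>i. \<sigma> (p + i)) t"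
  by (cases t) auto

lemma fo_definable_subst_terms:
  assumes G: "fo_definable ar cs Vp (p + a) G" and len: "length ts = a"
    and ts: "\<forall>t\<in>set ts. trm_ok cs t \<and> tvars t \<subseteq> {..<r}"
  shows "fo_definable ar cs Vp (p + r) (\<lambda>n J c y. G n J c (take p y @ map (teval c (\<lambda>i. drop p y ! i)) ts))"
proof -
  define f where "f i = (if i < p then i else p + r + (i - p))" for i
  have H1: "fo_definable ar cs Vp (p + r + a)
     (\<lambda>n J c x. \<forall>j\<in>set [0..<a]. teval c (\<lambda>i. x ! i) (V (p + r + j)) = teval c (\<lambda>i. x ! i) (trm_rename ((+) p) (ts ! j)))"
  proof (rule fo_definable_ball_list, intro ballI fo_definable_trm_eq)
    fix j assume j: "j \<in> set [0..<a]"
    then have "ts ! j \<in> set ts" using len by auto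
    then have "trm_ok cs (ts ! j)" "tvars (ts ! j) \<subseteq> {..<r}" using ts by auto
    then show "trm_ok cs (trm_rename ((+) p) (ts ! j))" "tvars (trm_rename ((+) p) (ts ! j)) \<subseteq> {..<p + r + a}"
      by (auto simp: trm_ok_trm_rename tvars_trm_rename)
  qed (auto)
  have H2: "fo_definable ar cs Vp (p + r + a) (\<lambda>n J c x. G n J c (map (\<lambda>i. x ! f i) [0..<p + a]))"
    by (rule fo_definable_reindex[OF G]) (auto simp: f_def)
  from fo_definable_ex_tuple[OF fo_definable_and[OF H1 H2]]
  show ?thesis
  proof (rule fo_definable_cong, goal_cases)
    case (1 n J c y)
    note h = 1(3-5)
    define M where "M = map (teval c (\<lambda>i. drop p y ! i)) ts"
    have mapeq: "\<And>z. length z = a \<Longrightarrow> map (\<lambda>i. (y @ z) ! f i) [0..<p + a] = take p y @ z"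
      by (rule nth_equalityI) (use h(2) in \<open>auto simp: f_def nth_append\<close>)
    have tv: "\<And>j z. j < a \<Longrightarrow> teval c (\<lambda>i. (y @ z) ! i) (trm_rename ((+) p) (ts ! j)) = M ! j"
    proof -
      fix j z assume j: "j < a"
      then have "ts ! j \<in> set ts" using len by auto
      then have "tvars (ts ! j) \<subseteq> {..<r}" using ts by auto
      then show "teval c (\<lambda>i. (y @ z) ! i) (trm_rename ((+) p) (ts ! j)) = M ! j"
        unfolding teval_trm_rename_add M_def using j len h(2)
        by (auto intro!: teval_cong simp: nth_append)
    qed
    have Mr: "set M \<subseteq> {..<n}"
    proof
      fix v assume "v \<in> set M"
      then obtain t where t: "t \<in> set ts" "v = teval c (\<lambda>i. drop p y ! i) t" unfolding M_def by auto
      show "v \<in> {..<n}"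
      proof (cases t)
        case (V i) then have "i < r" using ts t by auto
        then have "y ! (p + i) \<in> set y" using h(2) by simp
        then show ?thesis using t V h(2,3) by auto
      next
        case (C k) then show ?thesis using ts t h(1) by auto
      qed
    qed
    show ?case (is "?L \<longleftrightarrow> ?R")
    proof
      assume ?L
      then obtain z where z: "length z = a" "\<forall>j<a. z ! j = M ! j" "G n J c (take p y @ z)"
        using h(2) tv mapeq by (auto simp: nth_append)
      have "z = M" using z len by (intro nth_equalityI) (auto simp: M_def)
      then show ?R using z by (simp add: M_def)
    next
      assume ?R
      then show ?L using Mr len h(2) tv mapeq by (intro exI[of _ M]) (auto simp: nth_append M_def)
    qed
  qed
qed

text \<open>A first-order interpretation: a formula \<phi> over the signature arz, evaluated in the
  structures Iof n J c u with parameters u = take p y, defines a relation over J as soon as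
  the relations of the structures (and BIT, if \<phi> uses it) are definable.\<close>

lemma fo_definable_sat:
  fixes \<phi> :: "'q fo" and Iof :: "nat \<Rightarrow> ('r \<Rightarrow> nat list set) \<Rightarrow> (nat \<Rightarrow> nat) \<Rightarrow> nat list \<Rightarrow> 'q \<Rightarrow> nat list set"
  assumes "fo_wf arz csz b \<phi>" "fvs \<phi> \<subseteq> {..<r}" and cs: "csz \<subseteq> cs"
    and rel: "\<And>R a. arz R = Some a \<Longrightarrow> fo_definable ar cs Vp (p + a) (\<lambda>n J c y. drop p y \<in> Iof n J c (take p y) R)"
    and bt: "b \<Longrightarrow> fo_definable ar cs Vp (p + 2) (\<lambda>n J c y. bit (y ! p) (y ! Suc p))"
  shows "fo_definable ar cs Vp (p + r) (\<lambda>n J c y. sat n (Iof n J c (take p y)) c (\<lambda>i. drop p y ! i) \<phi>)"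
  using assms(1,2)
proof (induction \<phi> arbitrary: r)
  case (FRel R ts)
  have ok: "trm_ok csz t \<Longrightarrow> trm_ok cs t" for t using cs by (cases t) auto
  have "fo_definable ar cs Vp (p + r) (\<lambda>n J c y. drop p (take p y @ map (teval c (\<lambda>i. drop p y ! i)) ts) \<in>
       Iof n J c (take p (take p y @ map (teval c (\<lambda>i. drop p y ! i)) ts)) R)"
    by (rule fo_definable_subst_terms[OF rel]) (use FRel ok in auto)
  then show ?case by (rule fo_definable_cong) simp
next
  case (FEq t1 t2)
  have ok: "trm_ok csz t \<Longrightarrow> trm_ok cs t" for t using cs by (cases t) auto
  have "fo_definable ar cs Vp (p + r) (\<lambda>n J c y. teval c (\<lambda>i. y ! i) (trm_rename ((+) p) t1) = teval c (\<lambda>i. y ! i) (trm_rename ((+) p) t2))"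
    by (rule fo_definable_trm_eq) (use FEq ok in \<open>auto simp: trm_ok_trm_rename tvars_trm_rename\<close>)
  then show ?case by (rule fo_definable_cong) (simp add: teval_trm_rename_add)
next
  case (FLe t1 t2)
  have ok: "trm_ok csz t \<Longrightarrow> trm_ok cs t" for t using cs by (cases t) auto
  have "fo_definable ar cs Vp (p + r) (\<lambda>n J c y. teval c (\<lambda>i. y ! i) (trm_rename ((+) p) t1) \<le> teval c (\<lambda>i. y ! i) (trm_rename ((+) p) t2))"
    by (rule fo_definable_trm_le) (use FLe ok in \<open>auto simp: trm_ok_trm_rename tvars_trm_rename\<close>)
  then show ?case by (rule fo_definable_cong) (simp add: teval_trm_rename_add)
next
  case (FBit t1 t2)
  have ok: "trm_ok csz t \<Longrightarrow> trm_ok cs t" for t using cs by (cases t) auto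
  have "fo_definable ar cs Vp (p + r) (\<lambda>n J c y. (\<lambda>y'. bit (y' ! p) (y' ! Suc p)) (take p y @ map (teval c (\<lambda>i. drop p y ! i)) [t1, t2]))"
    by (rule fo_definable_subst_terms[OF bt]) (use FBit ok in auto)
  then show ?case by (rule fo_definable_cong) (simp add: nth_append)
next
  case (FNot \<phi>) then show ?case by (auto intro: fo_definable_not)
next
  case (FAnd \<phi> \<psi>) then show ?case by (auto intro: fo_definable_and)
next
  case (FEx v \<phi>)
  define r' where "r' = max r (Suc v)"
  have IH: "fo_definable ar cs Vp (p + r') (\<lambda>n J c y. sat n (Iof n J c (take p y)) c (\<lambda>i. drop p y ! i) \<phi>)"
    by (rule FEx.IH) (use FEx.prems in \<open>auto simp: r'_def\<close>)
  define f where "f i = (if i < p then i else if i - p = v then p + r else if i - p < r then i else p + r)" for i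
  have "fo_definable ar cs Vp (Suc (p + r)) (\<lambda>n J c x. sat n (Iof n J c (take p (map (\<lambda>i. x ! f i) [0..<p + r'])))
          c (\<lambda>i. drop p (map (\<lambda>i. x ! f i) [0..<p + r']) ! i) \<phi>)"
    by (rule fo_definable_reindex[OF IH]) (auto simp: f_def)
  from fo_definable_ex[OF this]
  show ?case
  proof (rule fo_definable_cong, goal_cases)
    case (1 n J c y)
    note h = 1(4)
    have tk: "\<And>a. take p (map (\<lambda>i. (y @ [a]) ! f i) [0..<p + r']) = take p y"
      by (rule nth_equalityI) (use h in \<open>auto simp: f_def nth_append\<close>)
    have sa: "\<And>a. sat n (Iof n J c (take p y)) c (\<lambda>i. drop p (map (\<lambda>i. (y @ [a]) ! f i) [0..<p + r']) ! i) \<phi>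
       = sat n (Iof n J c (take p y)) c ((\<lambda>i. drop p y ! i)(v := a)) \<phi>"
    proof (rule sat_cong, intro ballI)
      fix a i assume i: "i \<in> fvs \<phi>"
      then have "i < r'" using FEx.prems by (auto simp: r'_def)
      moreover have "i \<noteq> v \<Longrightarrow> i < r" using i FEx.prems by auto
      ultimately show "drop p (map (\<lambda>i. (y @ [a]) ! f i) [0..<p + r']) ! i = ((\<lambda>i. drop p y ! i)(v := a)) i"
        using h by (auto simp: f_def nth_append)
    qed
    show ?case by (simp only: tk sa sat.simps)
  qed
qed

section \<open>Databases and changes\<close>

lemma append_in_tuples: "x \<in> tuples n a \<Longrightarrow> y \<in> tuples n b \<Longrightarrow> x @ y \<in> tuples n (a + b)"
  by (auto simp: tuples_def)

lemma finite_tuples: "finite (tuples n r)"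
  unfolding tuples_def using finite_lists_length_eq[of "{..<n}" r] by (simp add: conj_commute)

lemma card_tuples: "card (tuples n r) = n ^ r"
  unfolding tuples_def using card_lists_length_eq[of "{..<n}" r] by (simp add: conj_commute)

lemma is_db_apply_rq:
  assumes "rq_ok S \<rho>" "is_db S n I c"
  shows "is_db S n (apply_rq S n I c \<rho> a) c"
proof -
  have "(case srel S R of None \<Rightarrow> apply_rq S n I c \<rho> a R = {} | Some r \<Rightarrow> apply_rq S n I c \<rho> a R \<subseteq> tuples n r)" for R
  proof (cases "srel S R")
    case None
    then have "rrules \<rho> R = None" using assms(1) unfolding rq_ok_def by (metis option.distinct(1) option.exhaust)
    then show ?thesis using None assms(2) unfolding is_db_def apply_rq_def by (metis option.simps(4))
  next
    case (Some r)
    have "I R \<subseteq> tuples n r" using assms(2) Some unfolding is_db_def by (metis option.simps(5))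
    then show ?thesis using Some unfolding apply_rq_def by (auto split: option.splits)
  qed
  then show ?thesis using assms(2) unfolding is_db_def by blast
qed

lemma apply_rq_cong:
  assumes "rq_ok S \<rho>" "\<forall>R\<in>dom (srel S). I1 R = I2 R" "R \<in> dom (srel S)"
  shows "apply_rq S n I1 c \<rho> a R = apply_rq S n I2 c \<rho> a R"
proof (cases "rrules \<rho> R")
  case None then show ?thesis using assms by (simp add: apply_rq_def)
next
  case (Some \<mu>)
  then have wf: "fo_wf (srel S) (scst S) False \<mu>" using assms(1) unfolding rq_ok_def by blast
  have "\<And>\<sigma>. sat n I1 c \<sigma> \<mu> = sat n I2 c \<sigma> \<mu>"
    by (rule sat_cong_interp[OF wf]) (use assms(2) in auto)
  then show ?thesis using Some by (simp add: apply_rq_def)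
qed

section \<open>Short words\<close>

text \<open>Words of length at most log n over an alphabet of m letters are few enough to be
  named by (m+1)-tuples of domain elements: pad them to length log n with a fresh letter.\<close>

lemma card_short_words_le:
  assumes n: "0 < n"
  shows "card {v. set v \<subseteq> {..<m} \<and> length v \<le> floor_log n} \<le> n ^ Suc m"
proof -
  define W where "W = {v. set v \<subseteq> {..<m} \<and> length v \<le> floor_log n}"
  define B where "B = {xs. set xs \<subseteq> {..<Suc m} \<and> length xs = floor_log n}"
  define pad where "pad v = v @ replicate (floor_log n - length v) m" for v
  have tw: "takeWhile (\<lambda>x. x < m) (pad v) = v" if "v \<in> W" for v
    using that unfolding pad_def W_def by (subst takeWhile_append2) auto
  have inj: "inj_on pad W"
    by (rule inj_onI) (metis tw)
  have sub: "pad ` W \<subseteq> B" unfolding pad_def B_def W_def by auto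
  have finB: "finite B" unfolding B_def using finite_lists_length_eq[of "{..<Suc m}"] by simp
  have "card W \<le> card B" using card_inj_on_le[OF inj sub finB] .
  also have "card B = Suc m ^ floor_log n" unfolding B_def by (simp add: card_lists_length_eq)
  also have "\<dots> \<le> (2 ^ Suc m) ^ floor_log n"
    by (intro power_mono) (auto intro: less_imp_le less_exp simp del: power_Suc)
  also have "\<dots> = (2 ^ floor_log n) ^ Suc m" by (simp add: power_mult[symmetric] mult.commute)
  also have "\<dots> \<le> n ^ Suc m" using floor_log_exp2_le[OF n] by (intro power_mono) auto
  finally show ?thesis unfolding W_def .
qed

lemma short_words_encoding:
  assumes "0 < n"
  obtains f where "inj_on f {v. set v \<subseteq> {..<m} \<and> length v \<le> floor_log n}"
    and "f ` {v. set v \<subseteq> {..<m} \<and> length v \<le> floor_log n} \<subseteq> tuples n (Suc m)"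
proof -
  have fin: "finite {v. set v \<subseteq> {..<m} \<and> length v \<le> floor_log n}"
    using finite_lists_length_le[of "{..<m}" "floor_log n"] by simp
  have "card {v. set v \<subseteq> {..<m} \<and> length v \<le> floor_log n} \<le> card (tuples n (Suc m))"
    using card_short_words_le[OF assms] by (simp add: card_tuples)
  from card_le_inj[OF fin finite_tuples this] show thesis using that by blast
qed

lemma log_less_floor_log_Suc: "0 < n \<Longrightarrow> log 2 (real n) < real (floor_log n) + 1"
  using floor_log_altdef[of n] by simp

lemma log_depth_less:
  fixes d :: real
  assumes n: "0 < n"
  shows "d * (log 2 (real n) + 1) < real ((2 * nat \<lceil>d\<rceil> + 1) * (floor_log n + 1))"
proof -
  define L where "L = real (floor_log n)"
  have lg: "0 \<le> log 2 (real n)" "log 2 (real n) < L + 1" using n log_less_floor_log_Suc[OF n] by (auto simp: L_def)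
  have L0: "0 \<le> L" by (simp add: L_def)
  have K: "real ((2 * nat \<lceil>d\<rceil> + 1) * (floor_log n + 1)) = (2 * real (nat \<lceil>d\<rceil>) + 1) * (L + 1)"
    by (simp add: L_def algebra_simps)
  show ?thesis
  proof (cases "d \<le> 0")
    case True
    then have "d * (log 2 (real n) + 1) \<le> 0" using lg by (simp add: mult_nonpos_nonneg)
    moreover have "0 < (2 * real (nat \<lceil>d\<rceil>) + 1) * (L + 1)" using L0 by simp
    ultimately show ?thesis unfolding K by linarith
  next
    case False
    have "d * (log 2 (real n) + 1) < d * (L + 2)" using lg False by (intro mult_strict_left_mono) auto
    also have "\<dots> \<le> 2 * d * (L + 1)" using False L0 by (simp add: algebra_simps)
    also have "\<dots> \<le> 2 * real (nat \<lceil>d\<rceil>) * (L + 1)"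
      using L0 False by (intro mult_right_mono mult_left_mono) (auto intro: of_nat_ceiling)
    also have "\<dots> \<le> (2 * real (nat \<lceil>d\<rceil>) + 1) * (L + 1)" using L0 by (simp add: algebra_simps)
    finally show ?thesis unfolding K .
  qed
qed

section \<open>Evaluating a circuit layer by layer\<close>

definition gvals :: "circ \<Rightarrow> schema \<Rightarrow> nat \<Rightarrow> (nat \<Rightarrow> nat) \<Rightarrow> (nat \<Rightarrow> nat list set) \<Rightarrow> nat \<Rightarrow> nat list \<Rightarrow> bool" where
  "gvals Cc S n c D j = (gstep Cc S n D c ^^ j) (\<lambda>_. False)"

lemma gstep_differs_edge:
  "gstep Cc S n D c P x \<noteq> gstep Cc S n D c P' x \<Longrightarrow> \<exists>y\<in>tuples n (cw Cc). cedge_holds Cc n x y \<and> P y \<noteq> P' y"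
  unfolding gstep_def by (auto split: if_splits)

lemma gstep_cong: "(\<forall>y\<in>tuples n (cw Cc). P y = P' y) \<Longrightarrow> gstep Cc S n D c P x = gstep Cc S n D c P' x"
  using gstep_differs_edge[of Cc S n D c P x P'] by blast

lemma gstep_funpow_cong:
  "(\<forall>y\<in>tuples n (cw Cc). P y = P' y) \<Longrightarrow> x \<in> tuples n (cw Cc) \<Longrightarrow>
   (gstep Cc S n D c ^^ j) P x = (gstep Cc S n D c ^^ j) P' x"
  by (induction j arbitrary: x) (simp_all add: gstep_cong)

lemma gstep_cong_db:
  "(\<forall>R\<in>dom (srel S). D R = D' R) \<Longrightarrow> gstep Cc S n D c P = gstep Cc S n D' c P"
  unfolding gstep_def inval_def by (auto simp: fun_eq_iff)

lemma gstep_funpow_cong_db: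
  "(\<forall>R\<in>dom (srel S). D R = D' R) \<Longrightarrow> (gstep Cc S n D c ^^ j) P = (gstep Cc S n D' c ^^ j) P"
  by (induction j) (simp_all add: gstep_cong_db)

lemma gvals_Suc: "gvals Cc S n c D (Suc j) = gstep Cc S n D c (gvals Cc S n c D j)"
  by (simp add: gvals_def)

lemma gvals_add: "gvals Cc S n c D (j + i) = (gstep Cc S n D c ^^ j) (gvals Cc S n c D i)"
  by (simp add: gvals_def funpow_add)

lemma gval_eq_gvals: "gval Cc S n D c d = gvals Cc S n c D (Suc d)"
proof (induction d)
  case 0 then show ?case by (simp add: gvals_def fun_eq_iff)
next
  case (Suc d) then show ?case by (simp add: gvals_Suc[of Cc S n c D "Suc d"])
qed

lemma gvals_change_path:
  "x \<in> tuples n (cw Cc) \<Longrightarrow> gvals Cc S n c D (Suc j) x \<noteq> gvals Cc S n c D j x \<Longrightarrow>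
   \<exists>g. g 0 = x \<and> (\<forall>i\<le>j. g i \<in> tuples n (cw Cc)) \<and> (\<forall>i<j. cedge_holds Cc n (g i) (g (Suc i)))"
proof (induction j arbitrary: x)
  case 0 then show ?case by (intro exI[of _ "\<lambda>_. x"]) auto
next
  case (Suc j)
  have "gstep Cc S n D c (gvals Cc S n c D (Suc j)) x \<noteq> gstep Cc S n D c (gvals Cc S n c D j) x"
    using Suc.prems(2) by (simp only: gvals_Suc[of Cc S n c D "Suc j"] gvals_Suc[of Cc S n c D j] not_False_eq_True)
  from gstep_differs_edge[OF this] obtain y where y: "y \<in> tuples n (cw Cc)" "cedge_holds Cc n x y"
      "gvals Cc S n c D (Suc j) y \<noteq> gvals Cc S n c D j y"
    by blast
  obtain g where g: "g 0 = y" "\<forall>i\<le>j. g i \<in> tuples n (cw Cc)" "\<forall>i<j. cedge_holds Cc n (g i) (g (Suc i))"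
    using Suc.IH[OF y(1) y(3)] by blast
  show ?case
  proof (intro exI[of _ "\<lambda>i. if i = 0 then x else g (i - 1)"] conjI allI impI)
    fix i assume i: "i \<le> Suc j"
    show "(if i = 0 then x else g (i - 1)) \<in> tuples n (cw Cc)"
    proof (cases "i = 0")
      case True show ?thesis unfolding if_P[OF True] by (rule Suc.prems(1))
    next
      case False
      then have "g (i - 1) \<in> tuples n (cw Cc)" using g(2) i by auto
      then show ?thesis unfolding if_not_P[OF False] .
    qed
  next
    fix i assume i: "i < Suc j"
    show "cedge_holds Cc n (if i = 0 then x else g (i - 1)) (if Suc i = 0 then x else g (Suc i - 1))"
    proof (cases i)
      case 0 then show ?thesis using g(1) y(2) by simp
    next
      case (Suc i')
      then have "i' < j" using i by simp
      then have "cedge_holds Cc n (g i') (g (Suc i'))" using g(3) by blast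
      then show ?thesis unfolding Suc by simp
    qed
  qed simp
qed

lemma circ_ok_path_length:
  "circ_ok S k Cc \<Longrightarrow> 0 < n \<Longrightarrow> \<forall>i\<le>L. g i \<in> tuples n (cw Cc) \<Longrightarrow>
   \<forall>i<L. cedge_holds Cc n (g i) (g (Suc i)) \<Longrightarrow> real L \<le> cdep Cc * (log 2 (real n) + 1)"
  unfolding circ_ok_def by blast

lemma gvals_stable:
  assumes Cc: "circ_ok S k Cc" and n: "0 < n" and x: "x \<in> tuples n (cw Cc)"
    and j0: "cdep Cc * (log 2 (real n) + 1) < real j0" and "j0 \<le> j"
  shows "gvals Cc S n c D j x = gvals Cc S n c D j0 x"
  using \<open>j0 \<le> j\<close>
proof (induction j rule: dec_induct)
  case (step j)
  have "gvals Cc S n c D (Suc j) x = gvals Cc S n c D j x"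
  proof (rule ccontr)
    assume "gvals Cc S n c D (Suc j) x \<noteq> gvals Cc S n c D j x"
    from gvals_change_path[OF x this] obtain g
      where "\<forall>i\<le>j. g i \<in> tuples n (cw Cc)" "\<forall>i<j. cedge_holds Cc n (g i) (g (Suc i))"
      by blast
    then have "real j \<le> cdep Cc * (log 2 (real n) + 1)" by (rule circ_ok_path_length[OF Cc n])
    then show False using j0 step(1) by linarith
  qed
  then show ?case using step(3) by simp
qed simp

lemma gvals_eq_beyond_depth:
  assumes "circ_ok S k Cc" "0 < n" "x \<in> tuples n (cw Cc)"
    and "cdep Cc * (log 2 (real n) + 1) < real i" "cdep Cc * (log 2 (real n) + 1) < real j"
  shows "gvals Cc S n c D i x = gvals Cc S n c D j x"
proof -
  have mn: "cdep Cc * (log 2 (real n) + 1) < real (min i j)" using assms(4,5) by (simp add: min_def)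
  have "gvals Cc S n c D i x = gvals Cc S n c D (min i j) x" by (rule gvals_stable[OF assms(1-3) mn]) simp
  also have "\<dots> = gvals Cc S n c D j x" by (rule gvals_stable[OF assms(1-3) mn, symmetric]) simp
  finally show ?thesis .
qed

section \<open>The dynamic program\<close>

text \<open>The list chs enumerates \<Delta>; a word over the alphabet {..<m} stands for the sequence
  of changes with these indices, applied from left to right.\<close>

datatype aux_sym = QueryRel | BitRel | EmptyCode | Prepend nat | Overflow nat nat | WordDb nat | WordGates

instance aux_sym :: countable by countable_datatype

locale ac1_dyn =
  fixes S :: schema and kq :: nat and q :: "nat \<Rightarrow> (nat \<Rightarrow> nat list set) \<Rightarrow> (nat \<Rightarrow> nat) \<Rightarrow> nat list set"
    and \<Delta> :: "rq set" and Cc :: circ and chs :: "rq list"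
  assumes sok: "schema_ok S" and cok: "circ_ok S kq Cc"
    and qrep: "\<And>n I c. 0 < n \<Longrightarrow> is_db S n I c \<Longrightarrow>
        q n I c = {a \<in> tuples n kq. gval Cc S n I c (dbound Cc n) (a @ replicate (cw Cc - kq) 0)}"
    and chs: "set chs = \<Delta>"
    and rqok: "\<And>\<rho>. \<rho> \<in> \<Delta> \<Longrightarrow> rq_ok S \<rho> \<and> rpar \<rho> = 0"
begin

abbreviation "m \<equiv> length chs"
abbreviation "gw \<equiv> cw Cc"
definition ew :: nat where "ew = Suc m"

definition words :: "nat \<Rightarrow> nat list set" where
  "words n = {v. set v \<subseteq> {..<m} \<and> length v \<le> floor_log n}"

definition code :: "nat \<Rightarrow> nat list \<Rightarrow> nat list" where
  "code n = (SOME f. inj_on f (words n) \<and> f ` words n \<subseteq> tuples n ew)"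

text \<open>Since log n < floor_log n + 1, layers * (floor_log n + 1) exceeds the depth bound
  cdep * (log n + 1) of the circuit.\<close>

definition layers :: nat where "layers = 2 * nat \<lceil>cdep Cc\<rceil> + 1"

definition run :: "nat \<Rightarrow> (nat \<Rightarrow> nat) \<Rightarrow> nat list \<Rightarrow> (nat \<Rightarrow> nat list set) \<Rightarrow> (nat \<Rightarrow> nat list set)" where
  "run n c v I = fold (\<lambda>a J. apply_rq S n J c (chs ! a) []) v I"

lemma code_props:
  assumes "0 < n"
  shows "inj_on (code n) (words n) \<and> code n ` words n \<subseteq> tuples n ew"
proof -
  obtain f where "inj_on f (words n)" "f ` words n \<subseteq> tuples n ew"
    unfolding words_def ew_def by (rule short_words_encoding[OF assms])
  then have "\<exists>f. inj_on f (words n) \<and> f ` words n \<subseteq> tuples n ew" by blast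
  then show ?thesis unfolding code_def by (rule someI_ex)
qed

lemma code_in_tuples: "0 < n \<Longrightarrow> v \<in> words n \<Longrightarrow> code n v \<in> tuples n ew"
  using code_props by blast

lemma code_eq_iff: "0 < n \<Longrightarrow> v \<in> words n \<Longrightarrow> v' \<in> words n \<Longrightarrow> code n v = code n v' \<longleftrightarrow> v = v'"
  using code_props by (auto dest: inj_onD)

lemma length_code: "0 < n \<Longrightarrow> v \<in> words n \<Longrightarrow> length (code n v) = ew"
  using code_in_tuples by (simp add: tuples_def)

lemma run_Cons: "run n c (a # v) I = run n c v (apply_rq S n I c (chs ! a) [])"
  by (simp add: run_def)

lemma run_snoc: "run n c (v @ [b]) I = apply_rq S n (run n c v I) c (chs ! b) []"
  by (simp add: run_def)

lemma is_db_run: "is_db S n I c \<Longrightarrow> set v \<subseteq> {..<m} \<Longrightarrow> is_db S n (run n c v I) c"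
proof (induction v arbitrary: I)
  case Nil then show ?case by (simp add: run_def)
next
  case (Cons a v)
  have "chs ! a \<in> \<Delta>" using Cons.prems chs by auto
  then have "is_db S n (apply_rq S n I c (chs ! a) []) c" using is_db_apply_rq rqok Cons.prems by blast
  then show ?case using Cons by (simp add: run_Cons)
qed

lemma chs_nth_in: "b < m \<Longrightarrow> chs ! b \<in> \<Delta>" using chs by auto

lemma rq_ok_chs_nth: "b < m \<Longrightarrow> rq_ok S (chs ! b) \<and> rpar (chs ! b) = 0"
  using rqok chs_nth_in by blast

lemma Nil_in_words: "[] \<in> words n" by (simp add: words_def)

lemma Cons_in_words: "a < m \<Longrightarrow> v \<in> words n \<Longrightarrow> length v < floor_log n \<Longrightarrow> a # v \<in> words n"
  by (auto simp: words_def)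

lemma butlast_Cons_in_words: "a < m \<Longrightarrow> v \<in> words n \<Longrightarrow> butlast (a # v) \<in> words n"
  by (auto simp: words_def dest: in_set_butlastD)

lemma words_letters: "v \<in> words n \<Longrightarrow> set v \<subseteq> {..<m}" by (simp add: words_def)

lemma last_Cons_less: "a < m \<Longrightarrow> v \<in> words n \<Longrightarrow> last (a # v) < m"
  by (auto simp: words_def) (metis last_in_set lessThan_iff subsetD)

lemma run_Cons_butlast: "run n c (a # v) I = apply_rq S n (run n c (butlast (a # v)) I) c (chs ! last (a # v)) []"
proof -
  have "a # v = butlast (a # v) @ [last (a # v)]" by (rule append_butlast_last_id[symmetric]) simp
  then have "run n c (a # v) I = run n c (butlast (a # v) @ [last (a # v)]) I" by (rule arg_cong)
  then show ?thesis by (simp only: run_snoc)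
qed

lemma kq_le: "kq \<le> gw" using cok unfolding circ_ok_def by blast
lemma gw_pos: "1 \<le> gw" using cok unfolding circ_ok_def by blast

lemma mem_q_iff_gvals:
  assumes n: "0 < n" and db: "is_db S n I c" and x: "x \<in> tuples n kq"
  shows "x \<in> q n I c \<longleftrightarrow> gvals Cc S n c I (layers * (floor_log n + 1)) (x @ replicate (gw - kq) 0)"
proof -
  have xt: "x @ replicate (gw - kq) 0 \<in> tuples n gw" using x kq_le n by (auto simp: tuples_def)
  have "cdep Cc * (log 2 (real n) + 1) < real (layers * (floor_log n + 1))"
    using log_depth_less[OF n] by (simp add: layers_def)
  moreover have "cdep Cc * (log 2 (real n) + 1) < real (Suc (dbound Cc n))"
    unfolding dbound_def by linarith
  ultimately show ?thesis
    using qrep[OF n db] x gvals_eq_beyond_depth[OF cok n xt] by (simp add: gval_eq_gvals)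
qed

definition aux_arity :: "aux_sym \<Rightarrow> nat option" where
  "aux_arity X = (case X of QueryRel \<Rightarrow> Some kq | BitRel \<Rightarrow> Some 2 | EmptyCode \<Rightarrow> Some ew
     | Prepend a \<Rightarrow> (if a < m then Some (2 * ew) else None)
     | Overflow a b \<Rightarrow> (if a < m \<and> b < m then Some (2 * ew) else None)
     | WordDb R \<Rightarrow> map_option (\<lambda>r. r + ew) (srel S R)
     | WordGates \<Rightarrow> Some (gw + ew))"

text \<open>Auxiliary relation symbols of a dynamic program are natural numbers; those of the
  form to_nat X carry the relation X, all others are unused.\<close>

definition aux_arity_nat :: "nat \<Rightarrow> nat option" where
  "aux_arity_nat T = (if T \<in> range (to_nat :: aux_sym \<Rightarrow> nat) then aux_arity (from_nat T) else None)"

lemma aux_arity_nat_to_nat[simp]: "aux_arity_nat (to_nat X) = aux_arity X"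
  by (simp add: aux_arity_nat_def)

abbreviation "prog_arity \<equiv> case_sum (srel S) aux_arity_nat"

text \<open>BitRel stores BIT,
  which the uniformity formulas of the circuit use but update formulas cannot. A tuple ending
  in the code of a word v concerns the database run n c v I: WordDb R holds its relation R,
  WordGates the gates true after layers * (log n - |v| + 1) layers. Prepend a and Overflow a b
  link the code of v to that of a v or, if a v is too long, to that of a v without its last
  letter b.\<close>

definition intended :: "nat \<Rightarrow> (nat \<Rightarrow> nat) \<Rightarrow> (nat \<Rightarrow> nat list set) \<Rightarrow> aux_sym \<Rightarrow> nat list set" where
  "intended n c I X = (case X of
     QueryRel \<Rightarrow> q n I c
   | BitRel \<Rightarrow> {[i, j] | i j. i < n \<and> j < n \<and> bit i j}
   | EmptyCode \<Rightarrow> {code n []}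
   | Prepend a \<Rightarrow> (if a < m then {code n v @ code n (a # v) | v. v \<in> words n \<and> length v < floor_log n} else {})
   | Overflow a b \<Rightarrow> (if a < m \<and> b < m then {code n v @ code n (butlast (a # v)) | v. v \<in> words n \<and> length v = floor_log n \<and> last (a # v) = b} else {})
   | WordDb R \<Rightarrow> (if srel S R \<noteq> None then {t @ code n v | t v. v \<in> words n \<and> t \<in> run n c v I R} else {})
   | WordGates \<Rightarrow> {g @ code n v | g v. v \<in> words n \<and> g \<in> tuples n gw \<and> gvals Cc S n c (run n c v I) (layers * (floor_log n - length v + 1)) g})"

definition consistent :: "nat \<Rightarrow> ((nat + nat) \<Rightarrow> nat list set) \<Rightarrow> (nat \<Rightarrow> nat) \<Rightarrow> bool" where
  "consistent n J c \<longleftrightarrow> is_db S n (\<lambda>R. J (Inl R)) c \<and> (\<forall>X. aux_arity X \<noteq> None \<longrightarrow> J (Inr (to_nat X)) = intended n c (\<lambda>R. J (Inl R)) X)"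

lemma intended_simps:
  "intended n c I QueryRel = q n I c"
  "intended n c I BitRel = {[i, j] | i j. i < n \<and> j < n \<and> bit i j}"
  "intended n c I EmptyCode = {code n []}"
  "a < m \<Longrightarrow> intended n c I (Prepend a) = {code n v @ code n (a # v) | v. v \<in> words n \<and> length v < floor_log n}"
  "a < m \<Longrightarrow> b < m \<Longrightarrow> intended n c I (Overflow a b) = {code n v @ code n (butlast (a # v)) | v. v \<in> words n \<and> length v = floor_log n \<and> last (a # v) = b}"
  "srel S R \<noteq> None \<Longrightarrow> intended n c I (WordDb R) = {t @ code n v | t v. v \<in> words n \<and> t \<in> run n c v I R}"
  "intended n c I WordGates = {g @ code n v | g v. v \<in> words n \<and> g \<in> tuples n gw \<and> gvals Cc S n c (run n c v I) (layers * (floor_log n - length v + 1)) g}"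
  by (simp_all add: intended_def)

lemma mem_bit_rel: "([a, b] \<in> {[i, j] | i j. i < n \<and> j < n \<and> bit i j}) = (a < n \<and> b < n \<and> bit a b)"
  by auto

text \<open>Update formulas need to be correct only on states satisfying the invariant consistent.\<close>

abbreviation definable where "definable \<equiv> fo_definable prog_arity (scst S) consistent"

lemma consistent_aux: "consistent n J c \<Longrightarrow> aux_arity X \<noteq> None \<Longrightarrow> J (Inr (to_nat X)) = intended n c (\<lambda>R. J (Inl R)) X"
  by (simp add: consistent_def)

lemma consistent_is_db: "consistent n J c \<Longrightarrow> is_db S n (\<lambda>R. J (Inl R)) c"
  by (simp add: consistent_def)

lemma definable_aux_atom:
  assumes "aux_arity X = Some (length is)" "\<forall>i\<in>set is. i < r"
  shows "definable r (\<lambda>n J c x. map (\<lambda>i. x ! i) is \<in> J (Inr (to_nat X)))"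
  by (rule fo_definable_atom_vars) (use assms in auto)

lemma definable_bit: "definable 2 (\<lambda>n J c y. bit (y ! 0) (y ! 1))"
proof -
  have "definable 2 (\<lambda>n J c x. map (\<lambda>i. x ! i) [0, 1] \<in> J (Inr (to_nat BitRel)))"
    by (rule definable_aux_atom) (auto simp: aux_arity_def)
  then show ?thesis
  proof (rule fo_definable_cong)
    fix n J c and y :: "nat list" assume h: "consistent n J c" "length y = 2" "set y \<subseteq> {..<n}"
    have "y ! 0 \<in> set y" "y ! 1 \<in> set y" using h(2) by auto
    then have "y ! 0 < n" "y ! 1 < n" using h(3) by auto
    then show "(map (\<lambda>i. y ! i) [0, 1] \<in> J (Inr (to_nat BitRel))) = bit (y ! 0) (y ! 1)"
    proof -
      have m: "map (\<lambda>i. y ! i) [0, 1] = [y ! 0, y ! 1]" by simp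
      have ab: "aux_arity BitRel \<noteq> None" by (simp add: aux_arity_def)
      have "J (Inr (to_nat BitRel)) = {[i, j] | i j. i < n \<and> j < n \<and> bit i j}"
        using consistent_aux[OF h(1) ab] by (simp only: intended_simps(2))
      then show ?thesis unfolding m using \<open>y ! 0 < n\<close> \<open>y ! 1 < n\<close> by (simp only: mem_bit_rel simp_thms)
    qed
  qed
qed

lemma definable_bit_at: "definable (p + 2) (\<lambda>n J c y. bit (y ! p) (y ! Suc p))"
proof -
  have "definable (p + 2) (\<lambda>n J c y. (\<lambda>y'. bit (y' ! 0) (y' ! 1)) (map (\<lambda>i. y ! (p + i)) [0..<2]))"
    by (rule fo_definable_reindex[OF definable_bit]) auto
  then show ?thesis by (rule fo_definable_cong) (simp add: upt_rec)
qed

lemma circ_formula_wf: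
  "\<phi> \<in> {cand Cc, cor Cc, cnot Cc} \<union> range (cin_rel Cc) \<union> range (cin_cst Cc) \<Longrightarrow>
   fo_wf Map.empty {} True \<phi> \<and> fvs \<phi> \<subseteq> {..< gw}"
proof -
  have "\<forall>\<phi>\<in>{cand Cc, cor Cc, cnot Cc} \<union> range (cin_rel Cc) \<union> range (cin_cst Cc).
        fo_wf Map.empty {} True \<phi> \<and> fvs \<phi> \<subseteq> {..< gw}"
    using cok unfolding circ_ok_def by (elim conjE) assumption
  then show "\<phi> \<in> {cand Cc, cor Cc, cnot Cc} \<union> range (cin_rel Cc) \<union> range (cin_cst Cc) \<Longrightarrow>
   fo_wf Map.empty {} True \<phi> \<and> fvs \<phi> \<subseteq> {..< gw}" by (rule bspec)
qed

lemma cedge_wf: "fo_wf Map.empty {} True (cedge Cc)"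
  using cok unfolding circ_ok_def by (elim conjE) assumption
lemma cedge_fvs: "fvs (cedge Cc) \<subseteq> {..< 2 * gw}"
  using cok unfolding circ_ok_def by (elim conjE) assumption

lemma definable_usat:
  assumes "fo_wf Map.empty {} True \<phi>" "fvs \<phi> \<subseteq> {..<r}"
  shows "definable (p + r) (\<lambda>n J c y. usat n \<phi> (drop p y))"
proof -
  have "definable (p + r) (\<lambda>n J c y. sat n ((\<lambda>n J c u R. {}) n J c (take p y)) c (\<lambda>i. drop p y ! i) \<phi>)"
  proof (rule fo_definable_sat[where arz="Map.empty" and csz="{}" and b=True and Iof="\<lambda>n J c u R. {}"
      and p=p and r=r and \<phi>=\<phi> and ar=prog_arity and cs="scst S" and Vp=consistent])
    show "fo_wf Map.empty {} True \<phi>" "fvs \<phi> \<subseteq> {..<r}" by (fact assms)+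
    show "{} \<subseteq> scst S" by simp
    show "\<And>R a. Map.empty R = Some a \<Longrightarrow> definable (p + a) (\<lambda>n J c y. drop p y \<in> (\<lambda>n J c u R. {}) n J c (take p y) R)"
      by (simp only: option.distinct(1))
    show "True \<Longrightarrow> definable (p + 2) (\<lambda>n J c y. bit (y ! p) (y ! Suc p))" by (rule definable_bit_at)
  qed
  then show ?thesis
  proof (rule fo_definable_cong)
    fix n J c y
    show "sat n ((\<lambda>n J c u R. {}) n J c (take p y)) c (\<lambda>i. drop p y ! i) \<phi> = usat n \<phi> (drop p y)"
      unfolding usat_def by (rule sat_cong_consts[OF assms(1)])
  qed
qed

lemma definable_usat_circ:
  assumes "\<phi> \<in> {cand Cc, cor Cc, cnot Cc} \<union> range (cin_rel Cc) \<union> range (cin_cst Cc)"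
  shows "definable (p + gw) (\<lambda>n J c y. usat n \<phi> (drop p y))"
proof -
  have h: "fo_wf Map.empty {} True \<phi> \<and> fvs \<phi> \<subseteq> {..< gw}" by (rule circ_formula_wf[OF assms])
  show ?thesis by (rule definable_usat[OF conjunct1[OF h] conjunct2[OF h]])
qed

lemma definable_cedge: "definable (p + 2 * gw) (\<lambda>n J c y. usat n (cedge Cc) (drop p y))"
  using cedge_wf cedge_fvs by (rule definable_usat)

lemma arity_le_gw: "srel S R = Some r \<Longrightarrow> r \<le> gw"
proof -
  have "\<forall>R r. srel S R = Some r \<longrightarrow> r \<le> gw" using cok unfolding circ_ok_def by (elim conjE) assumption
  then show "srel S R = Some r \<Longrightarrow> r \<le> gw" by blast
qed

lemma fin_srel: "finite (dom (srel S))" using sok by (simp add: schema_ok_def)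
lemma fin_scst: "finite (scst S)" using sok by (simp add: schema_ok_def)

lemma definable_ex_successor:
  fixes Pr :: "nat \<Rightarrow> ((nat + nat) \<Rightarrow> nat list set) \<Rightarrow> (nat \<Rightarrow> nat) \<Rightarrow> nat list \<Rightarrow> nat list \<Rightarrow> bool"
  assumes P: "definable (p + gw) (\<lambda>n J c y. Pr n J c (take p y) (drop p y))"
  shows "definable (p + gw) (\<lambda>n J c y. \<exists>z\<in>tuples n gw. cedge_holds Cc n (drop p y) z \<and> Pr n J c (take p y) z)"
proof -
  have E: "definable (p + gw + gw) (\<lambda>n J c z. usat n (cedge Cc) (drop p z))"
    using definable_cedge[of p] by (simp add: mult_2 add.assoc)
  define f where "f i = (if i < p then i else i + gw)" for i
  have "definable (p + gw + gw) (\<lambda>n J c z. (\<lambda>M. Pr n J c (take p M) (drop p M)) (map (\<lambda>i. z ! f i) [0..<p + gw]))"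
    by (rule fo_definable_reindex[OF P]) (auto simp: f_def)
  then have P2: "definable (p + gw + gw) (\<lambda>n J c z. Pr n J c (take p z) (drop (p + gw) z))"
  proof (rule fo_definable_cong, goal_cases)
    case (1 n J c z)
    have "map (\<lambda>i. z ! f i) [0..<p + gw] = take p z @ drop (p + gw) z"
      by (rule nth_equalityI) (use 1 in \<open>auto simp: f_def nth_append add.commute\<close>)
    then show ?case using 1 by simp
  qed
  from fo_definable_ex_tuple[OF fo_definable_and[OF E P2]] show ?thesis
  proof (rule fo_definable_cong, goal_cases)
    case (1 n J c y)
    then show ?case by (auto simp: tuples_def cedge_holds_def)
  qed
qed

lemma definable_inval:
  fixes Dof :: "nat \<Rightarrow> ((nat + nat) \<Rightarrow> nat list set) \<Rightarrow> (nat \<Rightarrow> nat) \<Rightarrow> nat list \<Rightarrow> nat \<Rightarrow> nat list set"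
  assumes D: "\<And>R r. srel S R = Some r \<Longrightarrow> definable (p + r) (\<lambda>n J c y. drop p y \<in> Dof n J c (take p y) R)"
  shows "definable (p + gw) (\<lambda>n J c y. inval Cc S n (Dof n J c (take p y)) c (drop p y))"
proof -
  have RP: "definable (p + gw) (\<lambda>n J c y. \<exists>R\<in>dom (srel S).
      usat n (cin_rel Cc R) (drop p y) \<and> take (the (srel S R)) (drop p y) \<in> Dof n J c (take p y) R)"
  proof (rule fo_definable_bex_finite[OF fin_srel], rule ballI)
    fix R assume "R \<in> dom (srel S)"
    then obtain r where r: "srel S R = Some r" by auto
    have rw: "r \<le> gw" by (rule arity_le_gw[OF r])
    have "definable (p + gw) (\<lambda>n J c y. (\<lambda>M. drop p M \<in> Dof n J c (take p M) R) (map (\<lambda>i. y ! i) [0..<p + r]))"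
      by (rule fo_definable_reindex[OF D[OF r]]) (use rw in auto)
    then have "definable (p + gw) (\<lambda>n J c y. take r (drop p y) \<in> Dof n J c (take p y) R)"
    proof (rule fo_definable_cong, goal_cases)
      case (1 n J c y)
      have "map (\<lambda>i. y ! i) [0..<p + r] = take (p + r) y"
        by (rule nth_equalityI) (use 1 rw in auto)
      then show ?case by (simp add: take_drop min_def add.commute)
    qed
    moreover have "definable (p + gw) (\<lambda>n J c y. usat n (cin_rel Cc R) (drop p y))"
      by (rule definable_usat_circ) auto
    ultimately show "definable (p + gw) (\<lambda>n J c y. usat n (cin_rel Cc R) (drop p y) \<and>
        take (the (srel S R)) (drop p y) \<in> Dof n J c (take p y) R)"
      unfolding r option.sel by (rule fo_definable_and[rotated])
  qed
  have CP: "definable (p + gw) (\<lambda>n J c y. \<exists>k\<in>scst S. usat n (cin_cst Cc k) (drop p y) \<and> y ! p = c k)"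
  proof (rule fo_definable_bex_finite[OF fin_scst], rule ballI)
    fix k assume k: "k \<in> scst S"
    show "definable (p + gw) (\<lambda>n J c y. usat n (cin_cst Cc k) (drop p y) \<and> y ! p = c k)"
      by (rule fo_definable_and[OF definable_usat_circ fo_definable_var_eq_const]) (use gw_pos k in auto)
  qed
  from fo_definable_or[OF RP CP] show ?thesis
  proof (rule fo_definable_cong, goal_cases)
    case (1 n J c y)
    then have "hd (drop p y) = y ! p" using gw_pos by (simp add: hd_drop_conv_nth)
    then show ?case unfolding inval_def by auto
  qed
qed

lemma definable_gstep:
  fixes Dof :: "nat \<Rightarrow> ((nat + nat) \<Rightarrow> nat list set) \<Rightarrow> (nat \<Rightarrow> nat) \<Rightarrow> nat list \<Rightarrow> nat \<Rightarrow> nat list set"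
    and Pr :: "nat \<Rightarrow> ((nat + nat) \<Rightarrow> nat list set) \<Rightarrow> (nat \<Rightarrow> nat) \<Rightarrow> nat list \<Rightarrow> nat list \<Rightarrow> bool"
  assumes D: "\<And>R r. srel S R = Some r \<Longrightarrow> definable (p + r) (\<lambda>n J c y. drop p y \<in> Dof n J c (take p y) R)"
    and P: "definable (p + gw) (\<lambda>n J c y. Pr n J c (take p y) (drop p y))"
  shows "definable (p + gw) (\<lambda>n J c y. gstep Cc S n (Dof n J c (take p y)) c (Pr n J c (take p y)) (drop p y))"
proof -
  have OR: "definable (p + gw) (\<lambda>n J c y. \<exists>z\<in>tuples n gw. cedge_holds Cc n (drop p y) z \<and> Pr n J c (take p y) z)"
    by (rule definable_ex_successor[OF P])
  have "definable (p + gw) (\<lambda>n J c y. \<exists>z\<in>tuples n gw. cedge_holds Cc n (drop p y) z \<and> \<not> Pr n J c (take p y) z)"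
    by (rule definable_ex_successor[where Pr="\<lambda>n J c u z. \<not> Pr n J c u z", OF fo_definable_not[OF P]])
  then have AND: "definable (p + gw) (\<lambda>n J c y. \<forall>z\<in>tuples n gw. cedge_holds Cc n (drop p y) z \<longrightarrow> Pr n J c (take p y) z)"
    by (rule fo_definable_cong[OF fo_definable_not]) blast
  have "definable (p + gw) (\<lambda>n J c y.
      if usat n (cand Cc) (drop p y) then \<forall>z\<in>tuples n gw. cedge_holds Cc n (drop p y) z \<longrightarrow> Pr n J c (take p y) z
      else if usat n (cor Cc) (drop p y) then \<exists>z\<in>tuples n gw. cedge_holds Cc n (drop p y) z \<and> Pr n J c (take p y) z
      else if usat n (cnot Cc) (drop p y) then \<not> (\<exists>z\<in>tuples n gw. cedge_holds Cc n (drop p y) z \<and> Pr n J c (take p y) z)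
      else inval Cc S n (Dof n J c (take p y)) c (drop p y))"
    by (intro fo_definable_if fo_definable_not definable_usat_circ AND OR definable_inval[OF D]) auto
  then show ?thesis by (rule fo_definable_cong) (simp add: gstep_def)
qed

lemma definable_gstep_funpow:
  fixes Dof :: "nat \<Rightarrow> ((nat + nat) \<Rightarrow> nat list set) \<Rightarrow> (nat \<Rightarrow> nat) \<Rightarrow> nat list \<Rightarrow> nat \<Rightarrow> nat list set"
    and Pof :: "nat \<Rightarrow> ((nat + nat) \<Rightarrow> nat list set) \<Rightarrow> (nat \<Rightarrow> nat) \<Rightarrow> nat list \<Rightarrow> nat list \<Rightarrow> bool"
  assumes D: "\<And>R r. srel S R = Some r \<Longrightarrow> definable (p + r) (\<lambda>n J c y. drop p y \<in> Dof n J c (take p y) R)"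
    and P: "definable (p + gw) (\<lambda>n J c y. Pof n J c (take p y) (drop p y))"
  shows "definable (p + gw) (\<lambda>n J c y. (gstep Cc S n (Dof n J c (take p y)) c ^^ j) (Pof n J c (take p y)) (drop p y))"
proof (induction j)
  case 0 then show ?case using P by simp
next
  case (Suc j)
  have "definable (p + gw) (\<lambda>n J c y. gstep Cc S n (Dof n J c (take p y)) c
      ((\<lambda>n J c u. (gstep Cc S n (Dof n J c u) c ^^ j) (Pof n J c u)) n J c (take p y)) (drop p y))"
    by (rule definable_gstep[OF D Suc]) 
  then show ?case by simp
qed

definition stored_db :: "((nat + nat) \<Rightarrow> nat list set) \<Rightarrow> nat list \<Rightarrow> nat \<Rightarrow> nat list set" where
  "stored_db J u R = (if srel S R = None then {} else {t. t @ u \<in> J (Inr (to_nat (WordDb R)))})"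

definition stored_gates :: "((nat + nat) \<Rightarrow> nat list set) \<Rightarrow> nat list \<Rightarrow> nat list \<Rightarrow> bool" where
  "stored_gates J u g = (g @ u \<in> J (Inr (to_nat WordGates)))"

definition stored_db_after :: "nat \<Rightarrow> (nat \<Rightarrow> nat) \<Rightarrow> nat \<Rightarrow> ((nat + nat) \<Rightarrow> nat list set) \<Rightarrow> nat list \<Rightarrow> nat \<Rightarrow> nat list set" where
  "stored_db_after n c b J u = apply_rq S n (stored_db J u) c (chs ! b) []"

lemma mem_code_tagged:
  assumes "0 < n" "length u = ew"
  shows "t @ u \<in> {t' @ code n v | t' v. v \<in> words n \<and> P t' v} \<longleftrightarrow> (\<exists>v\<in>words n. u = code n v \<and> P t v)"
    (is "?L \<longleftrightarrow> ?R")
proof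
  assume ?L
  then obtain t' v where tv: "t @ u = t' @ code n v" "v \<in> words n" "P t' v" by auto
  then have "t = t' \<and> u = code n v"
    using assms length_code[OF assms(1) tv(2)] by (simp add: append_eq_append_conv)
  then show ?R using tv by auto
qed auto

lemma mem_code_prefixed:
  assumes "0 < n" "length u = ew"
  shows "u @ u' \<in> {code n v @ f v | v. v \<in> words n \<and> P v} \<longleftrightarrow> (\<exists>v\<in>words n. P v \<and> u = code n v \<and> u' = f v)"
    (is "?L \<longleftrightarrow> ?R")
proof
  assume ?L
  then obtain v where v: "u @ u' = code n v @ f v" "v \<in> words n" "P v" by auto
  then have "u = code n v \<and> u' = f v"
    using assms length_code[OF assms(1) v(2)] by (simp add: append_eq_append_conv)
  then show ?R using v by auto
qed auto

lemma WordDb_mem: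
  assumes n: "0 < n" and R: "R \<in> dom (srel S)" and u: "length u = ew"
  shows "t @ u \<in> intended n c K (WordDb R) \<longleftrightarrow> (\<exists>v\<in>words n. u = code n v \<and> t \<in> run n c v K R)"
proof -
  have "srel S R \<noteq> None" using R by auto
  then show ?thesis by (simp only: intended_simps(6) mem_code_tagged[OF n u] not_False_eq_True)
qed

lemma WordGates_mem:
  assumes n: "0 < n" and u: "length u = ew"
  shows "g @ u \<in> intended n c K WordGates \<longleftrightarrow> (\<exists>v\<in>words n. u = code n v \<and> g \<in> tuples n gw \<and>
            gvals Cc S n c (run n c v K) (layers * (floor_log n - length v + 1)) g)"
  unfolding intended_simps(7) by (rule mem_code_tagged[OF n u])

lemma Prepend_mem:
  assumes V: "consistent n J c" and n: "0 < n" and a: "a < m" and u: "length u = ew"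
  shows "u @ u' \<in> J (Inr (to_nat (Prepend a))) \<longleftrightarrow> (\<exists>v\<in>words n. length v < floor_log n \<and> u = code n v \<and> u' = code n (a # v))"
proof -
  have "aux_arity (Prepend a) \<noteq> None" using a by (simp add: aux_arity_def)
  from consistent_aux[OF V this] show ?thesis
    unfolding intended_simps(4)[OF a] by (simp only: mem_code_prefixed[OF n u])
qed

lemma Overflow_mem:
  assumes V: "consistent n J c" and n: "0 < n" and a: "a < m" and b: "b < m" and u: "length u = ew"
  shows "u @ u' \<in> J (Inr (to_nat (Overflow a b))) \<longleftrightarrow>
     (\<exists>v\<in>words n. length v = floor_log n \<and> last (a # v) = b \<and> u = code n v \<and> u' = code n (butlast (a # v)))"
proof -
  have "aux_arity (Overflow a b) \<noteq> None" using a b by (simp add: aux_arity_def)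
  from consistent_aux[OF V this] show ?thesis
    unfolding intended_simps(5)[OF a b] by (simp only: mem_code_prefixed[OF n u] conj_assoc)
qed

lemma stored_db_eq:
  assumes V: "consistent n J c" and n: "0 < n" and v: "v \<in> words n" and R: "R \<in> dom (srel S)"
  shows "stored_db J (code n v) R = run n c v (\<lambda>R. J (Inl R)) R"
proof (rule set_eqI)
  fix t
  have "aux_arity (WordDb R) \<noteq> None" using R by (auto simp: aux_arity_def)
  then have "t \<in> stored_db J (code n v) R \<longleftrightarrow> t @ code n v \<in> intended n c (\<lambda>R. J (Inl R)) (WordDb R)"
    using consistent_aux[OF V] R by (auto simp: stored_db_def)
  also have "\<dots> \<longleftrightarrow> (\<exists>v'\<in>words n. code n v = code n v' \<and> t \<in> run n c v' (\<lambda>R. J (Inl R)) R)"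
    by (rule WordDb_mem[OF n R length_code[OF n v]])
  also have "\<dots> \<longleftrightarrow> t \<in> run n c v (\<lambda>R. J (Inl R)) R"
    using code_eq_iff[OF n v] v by auto
  finally show "t \<in> stored_db J (code n v) R \<longleftrightarrow> t \<in> run n c v (\<lambda>R. J (Inl R)) R" .
qed

lemma stored_gates_iff:
  assumes V: "consistent n J c" and n: "0 < n" and v: "v \<in> words n" and g: "g \<in> tuples n gw"
  shows "stored_gates J (code n v) g \<longleftrightarrow> gvals Cc S n c (run n c v (\<lambda>R. J (Inl R))) (layers * (floor_log n - length v + 1)) g"
proof -
  have "aux_arity WordGates \<noteq> None" by (simp add: aux_arity_def)
  then have "stored_gates J (code n v) g \<longleftrightarrow> g @ code n v \<in> intended n c (\<lambda>R. J (Inl R)) WordGates"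
    using consistent_aux[OF V] by (simp add: stored_gates_def)
  also have "\<dots> \<longleftrightarrow> (\<exists>v'\<in>words n. code n v = code n v' \<and> g \<in> tuples n gw \<and>
      gvals Cc S n c (run n c v' (\<lambda>R. J (Inl R))) (layers * (floor_log n - length v' + 1)) g)"
    by (rule WordGates_mem[OF n length_code[OF n v]])
  also have "\<dots> \<longleftrightarrow> gvals Cc S n c (run n c v (\<lambda>R. J (Inl R))) (layers * (floor_log n - length v + 1)) g"
    using code_eq_iff[OF n v] v g by auto
  finally show ?thesis .
qed

lemma stored_db_after_eq:
  assumes V: "consistent n J c" and n: "0 < n" and a: "a < m" and v: "v \<in> words n"
    and R: "R \<in> dom (srel S)"
  shows "stored_db_after n c (last (a # v)) J (code n (butlast (a # v))) R = run n c (a # v) (\<lambda>R. J (Inl R)) R"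
proof -
  have bw: "butlast (a # v) \<in> words n" by (rule butlast_Cons_in_words[OF a v])
  have lb: "last (a # v) < m" by (rule last_Cons_less[OF a v])
  have "stored_db_after n c (last (a # v)) J (code n (butlast (a # v))) R =
        apply_rq S n (run n c (butlast (a # v)) (\<lambda>R. J (Inl R))) c (chs ! last (a # v)) [] R"
    unfolding stored_db_after_def
    by (rule apply_rq_cong) (use rq_ok_chs_nth[OF lb] stored_db_eq[OF V n bw] R in auto)
  then show ?thesis by (simp add: run_Cons_butlast)
qed

lemma words_length_cases: "v \<in> words n \<Longrightarrow> length v < floor_log n \<or> length v = floor_log n"
  by (auto simp: words_def)

lemma updated_WordDb_iff:
  assumes V: "consistent n J c" and n: "0 < n" and a: "a < m" and R: "srel S R = Some r0"
    and u: "u \<in> tuples n ew"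
  shows "t @ u \<in> intended n c (apply_rq S n (\<lambda>R. J (Inl R)) c (chs ! a) []) (WordDb R) \<longleftrightarrow>
    ((\<exists>u'\<in>tuples n ew. u @ u' \<in> J (Inr (to_nat (Prepend a))) \<and> t \<in> stored_db J u' R) \<or>
     (\<exists>b<m. \<exists>u'\<in>tuples n ew. u @ u' \<in> J (Inr (to_nat (Overflow a b))) \<and> t \<in> stored_db_after n c b J u' R))"
  (is "?L \<longleftrightarrow> ?A \<or> ?B")
proof -
  define I where "I = (\<lambda>R. J (Inl R))"
  have ul: "length u = ew" using u by (simp add: tuples_def)
  have Rd: "R \<in> dom (srel S)" using R by auto
  have L: "?L \<longleftrightarrow> (\<exists>v\<in>words n. u = code n v \<and> t \<in> run n c (a # v) I R)"
    using WordDb_mem[OF n Rd ul] by (simp add: run_Cons I_def)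
  show ?thesis
  proof
    assume ?L
    then obtain v where v: "v \<in> words n" "u = code n v" "t \<in> run n c (a # v) I R" using L by blast
    show "?A \<or> ?B"
    proof (cases "length v < floor_log n")
      case True
      have av: "a # v \<in> words n" by (rule Cons_in_words[OF a v(1) True])
      have "u @ code n (a # v) \<in> J (Inr (to_nat (Prepend a)))"
        using Prepend_mem[OF V n a ul] v True by blast
      moreover have "t \<in> stored_db J (code n (a # v)) R" using stored_db_eq[OF V n av Rd] v(3) by (simp add: I_def)
      moreover have "code n (a # v) \<in> tuples n ew" by (rule code_in_tuples[OF n av])
      ultimately show ?thesis by blast
    next
      case False
      then have lv: "length v = floor_log n" using words_length_cases[OF v(1)] by simp
      define b where "b = last (a # v)"
      have b: "b < m" unfolding b_def by (rule last_Cons_less[OF a v(1)])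
      have bw: "butlast (a # v) \<in> words n" by (rule butlast_Cons_in_words[OF a v(1)])
      have "u @ code n (butlast (a # v)) \<in> J (Inr (to_nat (Overflow a b)))"
        using Overflow_mem[OF V n a b ul] v lv b_def by blast
      moreover have "t \<in> stored_db_after n c b J (code n (butlast (a # v))) R"
        using stored_db_after_eq[OF V n a v(1) Rd] v(3) by (simp add: I_def b_def)
      moreover have "code n (butlast (a # v)) \<in> tuples n ew" by (rule code_in_tuples[OF n bw])
      ultimately show ?thesis using b by blast
    qed
  next
    assume "?A \<or> ?B"
    then show ?L
    proof
      assume ?A
      then obtain u' where u': "u' \<in> tuples n ew" "u @ u' \<in> J (Inr (to_nat (Prepend a)))" "t \<in> stored_db J u' R"
        by blast
      then obtain v where v: "v \<in> words n" "length v < floor_log n" "u = code n v" "u' = code n (a # v)"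
        using Prepend_mem[OF V n a ul] by blast
      have av: "a # v \<in> words n" by (rule Cons_in_words[OF a v(1,2)])
      have "t \<in> run n c (a # v) I R" using stored_db_eq[OF V n av Rd] u'(3) v(4) by (simp add: I_def)
      then show ?L using L v by blast
    next
      assume ?B
      then obtain b u' where u': "b < m" "u' \<in> tuples n ew" "u @ u' \<in> J (Inr (to_nat (Overflow a b)))" "t \<in> stored_db_after n c b J u' R"
        by blast
      then obtain v where v: "v \<in> words n" "length v = floor_log n" "last (a # v) = b" "u = code n v" "u' = code n (butlast (a # v))"
        using Overflow_mem[OF V n a u'(1) ul] by blast
      have "t \<in> run n c (a # v) I R" using stored_db_after_eq[OF V n a v(1) Rd] u'(4) v by (simp add: I_def)
      then show ?L using L v by blast
    qed
  qed
qed

lemma gvals_layers_step: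
  assumes n: "0 < n" and lv: "length v < floor_log n" and g: "g \<in> tuples n gw"
    and P: "\<forall>y\<in>tuples n gw. P y = gvals Cc S n c D (layers * (floor_log n - length (a # v) + 1)) y"
  shows "(gstep Cc S n D c ^^ layers) P g = gvals Cc S n c D (layers * (floor_log n - length v + 1)) g"
proof -
  have e: "layers * (floor_log n - length v + 1) = layers + layers * (floor_log n - length (a # v) + 1)"
    using lv by (simp add: algebra_simps Suc_diff_Suc)
  show ?thesis unfolding e gvals_add by (rule gstep_funpow_cong[OF P g])
qed

lemma stored_gates_advance:
  assumes V: "consistent n J c" and n: "0 < n" and a: "a < m"
    and v: "v \<in> words n" "length v < floor_log n" and g: "g \<in> tuples n gw"
  shows "(gstep Cc S n (stored_db J (code n (a # v))) c ^^ layers) (stored_gates J (code n (a # v))) g =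
    gvals Cc S n c (run n c (a # v) (\<lambda>R. J (Inl R))) (layers * (floor_log n - length v + 1)) g"
proof -
  have av: "a # v \<in> words n" by (rule Cons_in_words[OF a v])
  have "(gstep Cc S n (stored_db J (code n (a # v))) c ^^ layers) (stored_gates J (code n (a # v))) g =
        (gstep Cc S n (run n c (a # v) (\<lambda>R. J (Inl R))) c ^^ layers) (stored_gates J (code n (a # v))) g"
    by (rule fun_cong[OF gstep_funpow_cong_db]) (use stored_db_eq[OF V n av] in blast)
  also have "\<dots> = gvals Cc S n c (run n c (a # v) (\<lambda>R. J (Inl R))) (layers * (floor_log n - length v + 1)) g"
    by (rule gvals_layers_step[OF n v(2) g]) (use stored_gates_iff[OF V n av] in simp)
  finally show ?thesis .
qed

lemma overflow_gates_eq:
  assumes V: "consistent n J c" and n: "0 < n" and a: "a < m"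
    and v: "v \<in> words n" "length v = floor_log n" and g: "g \<in> tuples n gw"
  shows "(gstep Cc S n (stored_db_after n c (last (a # v)) J (code n (butlast (a # v)))) c ^^ layers) (\<lambda>_. False) g =
    gvals Cc S n c (run n c (a # v) (\<lambda>R. J (Inl R))) (layers * (floor_log n - length v + 1)) g"
proof -
  have "(gstep Cc S n (stored_db_after n c (last (a # v)) J (code n (butlast (a # v)))) c ^^ layers) (\<lambda>_. False) =
        (gstep Cc S n (run n c (a # v) (\<lambda>R. J (Inl R))) c ^^ layers) (\<lambda>_. False)"
    by (rule gstep_funpow_cong_db) (use stored_db_after_eq[OF V n a v(1)] in blast)
  then show ?thesis using v(2) by (simp add: gvals_def)
qed

lemma updated_WordGates_iff:
  assumes V: "consistent n J c" and n: "0 < n" and a: "a < m"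
    and u: "u \<in> tuples n ew" and g: "g \<in> tuples n gw"
  shows "g @ u \<in> intended n c (apply_rq S n (\<lambda>R. J (Inl R)) c (chs ! a) []) WordGates \<longleftrightarrow>
    ((\<exists>u'\<in>tuples n ew. u @ u' \<in> J (Inr (to_nat (Prepend a))) \<and> (gstep Cc S n (stored_db J u') c ^^ layers) (stored_gates J u') g) \<or>
     (\<exists>b<m. \<exists>u'\<in>tuples n ew. u @ u' \<in> J (Inr (to_nat (Overflow a b))) \<and> (gstep Cc S n (stored_db_after n c b J u') c ^^ layers) (\<lambda>_. False) g))"
  (is "?L \<longleftrightarrow> ?A \<or> ?B")
proof -
  define I where "I = (\<lambda>R. J (Inl R))"
  have ul: "length u = ew" using u by (simp add: tuples_def)
  have L: "?L \<longleftrightarrow> (\<exists>v\<in>words n. u = code n v \<and> gvals Cc S n c (run n c (a # v) I) (layers * (floor_log n - length v + 1)) g)"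
    using WordGates_mem[OF n ul] g by (simp add: run_Cons I_def)
  note A = stored_gates_advance[OF V n a _ _ g, folded I_def]
  note B = overflow_gates_eq[OF V n a _ _ g, folded I_def]
  show ?thesis
  proof
    assume ?L
    then obtain v where v: "v \<in> words n" "u = code n v" "gvals Cc S n c (run n c (a # v) I) (layers * (floor_log n - length v + 1)) g"
      using L by blast
    show "?A \<or> ?B"
    proof (cases "length v < floor_log n")
      case True
      have av: "a # v \<in> words n" by (rule Cons_in_words[OF a v(1) True])
      have "u @ code n (a # v) \<in> J (Inr (to_nat (Prepend a)))"
        using Prepend_mem[OF V n a ul] v True by blast
      moreover have "code n (a # v) \<in> tuples n ew" by (rule code_in_tuples[OF n av])
      ultimately show ?thesis using A[OF v(1) True] v(3) by blast
    next
      case False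
      then have lv: "length v = floor_log n" using words_length_cases[OF v(1)] by simp
      define b where "b = last (a # v)"
      have b: "b < m" unfolding b_def by (rule last_Cons_less[OF a v(1)])
      have bw: "butlast (a # v) \<in> words n" by (rule butlast_Cons_in_words[OF a v(1)])
      have "u @ code n (butlast (a # v)) \<in> J (Inr (to_nat (Overflow a b)))"
        using Overflow_mem[OF V n a b ul] v lv b_def by blast
      moreover have "code n (butlast (a # v)) \<in> tuples n ew" by (rule code_in_tuples[OF n bw])
      ultimately show ?thesis using b B[OF v(1) lv] v(3) unfolding b_def by blast
    qed
  next
    assume "?A \<or> ?B"
    then show ?L
    proof
      assume ?A
      then obtain u' where u': "u' \<in> tuples n ew" "u @ u' \<in> J (Inr (to_nat (Prepend a)))"
          "(gstep Cc S n (stored_db J u') c ^^ layers) (stored_gates J u') g"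
        by blast
      then obtain v where v: "v \<in> words n" "length v < floor_log n" "u = code n v" "u' = code n (a # v)"
        using Prepend_mem[OF V n a ul] by blast
      then show ?L using L A[OF v(1,2)] u'(3) by blast
    next
      assume ?B
      then obtain b u' where u': "b < m" "u' \<in> tuples n ew" "u @ u' \<in> J (Inr (to_nat (Overflow a b)))"
          "(gstep Cc S n (stored_db_after n c b J u') c ^^ layers) (\<lambda>_. False) g"
        by blast
      then obtain v where v: "v \<in> words n" "length v = floor_log n" "last (a # v) = b" "u = code n v" "u' = code n (butlast (a # v))"
        using Overflow_mem[OF V n a u'(1) ul] by blast
      then show ?L using L B[OF v(1,2)] u'(4) by blast
    qed
  qed
qed

definition updated :: "nat \<Rightarrow> aux_sym \<Rightarrow> nat \<Rightarrow> ((nat + nat) \<Rightarrow> nat list set) \<Rightarrow> (nat \<Rightarrow> nat) \<Rightarrow> nat list \<Rightarrow> bool" where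
  "updated a X n J c x = (x \<in> intended n c (apply_rq S n (\<lambda>R. J (Inl R)) c (chs ! a) []) X)"

lemma map_nth_upt: "length z = a + b \<Longrightarrow> map (\<lambda>i. z ! i) [a..<a + b] = drop a z"
  by (rule nth_equalityI) auto

lemma definable_stored_db:
  assumes R: "srel S R = Some r"
  shows "definable (ew + r) (\<lambda>n J c y. drop ew y \<in> stored_db J (take ew y) R)"
proof -
  have A: "definable (ew + r) (\<lambda>n J c y. map (\<lambda>i. y ! i) ([ew..<ew + r] @ [0..<ew]) \<in> J (Inr (to_nat (WordDb R))))"
    by (rule definable_aux_atom) (use R in \<open>auto simp: aux_arity_def\<close>)
  show ?thesis
  proof (rule fo_definable_cong[OF A])
    fix n J c and y :: "nat list" assume h: "length y = ew + r"
    have M: "map (\<lambda>i. y ! i) ([ew..<ew + r] @ [0..<ew]) = drop ew y @ take ew y"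
      by (rule nth_equalityI) (use h in \<open>auto simp: nth_append\<close>)
    show "(map (\<lambda>i. y ! i) ([ew..<ew + r] @ [0..<ew]) \<in> J (Inr (to_nat (WordDb R)))) = (drop ew y \<in> stored_db J (take ew y) R)"
      unfolding M stored_db_def using R by simp
  qed
qed

lemma definable_stored_gates: "definable (ew + gw) (\<lambda>n J c y. stored_gates J (take ew y) (drop ew y))"
proof -
  have A: "definable (ew + gw) (\<lambda>n J c y. map (\<lambda>i. y ! i) ([ew..<ew + gw] @ [0..<ew]) \<in> J (Inr (to_nat WordGates)))"
    by (rule definable_aux_atom) (auto simp: aux_arity_def)
  show ?thesis
  proof (rule fo_definable_cong[OF A])
    fix n J c and y :: "nat list" assume h: "length y = ew + gw"
    have M: "map (\<lambda>i. y ! i) ([ew..<ew + gw] @ [0..<ew]) = drop ew y @ take ew y"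
      by (rule nth_equalityI) (use h in \<open>auto simp: nth_append\<close>)
    show "(map (\<lambda>i. y ! i) ([ew..<ew + gw] @ [0..<ew]) \<in> J (Inr (to_nat WordGates))) = stored_gates J (take ew y) (drop ew y)"
      unfolding M stored_gates_def by simp
  qed
qed

lemma definable_stored_db_after:
  assumes b: "b < m" and R: "srel S R = Some r"
  shows "definable (ew + r) (\<lambda>n J c y. drop ew y \<in> stored_db_after n c b J (take ew y) R)"
proof (cases "rrules (chs ! b) R")
  case None
  show ?thesis
  proof (rule fo_definable_cong[OF definable_stored_db[OF R]])
    fix n J c and y :: "nat list"
    show "(drop ew y \<in> stored_db J (take ew y) R) = (drop ew y \<in> stored_db_after n c b J (take ew y) R)"
      using None by (simp add: stored_db_after_def apply_rq_def)
  qed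
next
  case (Some \<mu>)
  have ok: "rq_ok S (chs ! b)" "rpar (chs ! b) = 0" using rq_ok_chs_nth[OF b] by auto
  then have wf: "fo_wf (srel S) (scst S) False \<mu>" "fvs \<mu> \<subseteq> {..<r}"
    using Some R unfolding rq_ok_def by force+
  have C: "definable (ew + r) (\<lambda>n J c y. sat n ((\<lambda>n J c u. stored_db J u) n J c (take ew y)) c (\<lambda>i. drop ew y ! i) \<mu>)"
  proof (rule fo_definable_sat[where arz="srel S" and csz="scst S" and b=False and Iof="\<lambda>n J c u. stored_db J u"
      and p=ew and r=r and \<phi>=\<mu> and ar=prog_arity and cs="scst S" and Vp=consistent])
    show "fo_wf (srel S) (scst S) False \<mu>" "fvs \<mu> \<subseteq> {..<r}" by (fact wf)+
    show "scst S \<subseteq> scst S" by (rule order_refl)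
    show "\<And>R a. srel S R = Some a \<Longrightarrow> definable (ew + a) (\<lambda>n J c y. drop ew y \<in> (\<lambda>n J c u. stored_db J u) n J c (take ew y) R)"
      by (rule definable_stored_db)
    show "False \<Longrightarrow> definable (ew + 2) (\<lambda>n J c y. bit (y ! ew) (y ! Suc ew))" by (rule FalseE)
  qed
  show ?thesis
  proof (rule fo_definable_cong[OF C])
    fix n J c and y :: "nat list" assume h: "length y = ew + r" "set y \<subseteq> {..<n}"
    have "drop ew y \<in> tuples n r" using h set_drop_subset[of ew y] by (auto simp: tuples_def)
    then show "sat n ((\<lambda>n J c u. stored_db J u) n J c (take ew y)) c (\<lambda>i. drop ew y ! i) \<mu> = (drop ew y \<in> stored_db_after n c b J (take ew y) R)"
      using Some R by (simp add: stored_db_after_def apply_rq_def)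
  qed
qed

lemma intended_static: "X \<in> {BitRel, EmptyCode} \<union> range Prepend \<union> range (\<lambda>(a, b). Overflow a b) \<Longrightarrow> intended n c I X = intended n c I' X"
  by (auto simp: intended_def)

lemma definable_updated_static:
  assumes X: "X \<in> {BitRel, EmptyCode} \<union> range Prepend \<union> range (\<lambda>(a, b). Overflow a b)" and r: "aux_arity X = Some r"
  shows "definable r (updated a X)"
proof -
  have A: "definable r (\<lambda>n J c x. map (\<lambda>i. x ! i) [0..<r] \<in> J (Inr (to_nat X)))"
    by (rule definable_aux_atom) (use r in auto)
  show ?thesis
  proof (rule fo_definable_cong[OF A])
    fix n J c and x :: "nat list" assume h: "consistent n J c" "length x = r"
    have M: "map (\<lambda>i. x ! i) [0..<r] = x" using h(2) by (intro nth_equalityI) auto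
    show "(map (\<lambda>i. x ! i) [0..<r] \<in> J (Inr (to_nat X))) = updated a X n J c x"
      unfolding M updated_def using consistent_aux[OF h(1)] r intended_static[OF X, of n c "\<lambda>R. J (Inl R)" "apply_rq S n (\<lambda>R. J (Inl R)) c (chs ! a) []"] by simp
  qed
qed

lemma definable_link_atom:
  assumes X: "aux_arity X = Some (2 * ew)"
  shows "definable (r0 + ew + ew) (\<lambda>n J c z. drop r0 z \<in> J (Inr (to_nat X)))"
proof -
  have A: "definable (r0 + ew + ew) (\<lambda>n J c z. map (\<lambda>i. z ! i) [r0..<r0 + (ew + ew)] \<in> J (Inr (to_nat X)))"
    by (rule definable_aux_atom) (use X in auto)
  show ?thesis
  proof (rule fo_definable_cong[OF A])
    fix n J c and z :: "nat list" assume h: "length z = r0 + ew + ew"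
    show "(map (\<lambda>i. z ! i) [r0..<r0 + (ew + ew)] \<in> J (Inr (to_nat X))) = (drop r0 z \<in> J (Inr (to_nat X)))"
      using map_nth_upt[of z r0 "ew + ew"] h by simp
  qed
qed

lemma definable_swap_blocks:
  fixes G :: "nat \<Rightarrow> ((nat + nat) \<Rightarrow> nat list set) \<Rightarrow> (nat \<Rightarrow> nat) \<Rightarrow> nat list \<Rightarrow> nat list \<Rightarrow> bool"
  assumes A: "definable (ew + r0) (\<lambda>n J c y. G n J c (take ew y) (drop ew y))"
  shows "definable (r0 + ew + ew) (\<lambda>n J c z. G n J c (drop (r0 + ew) z) (take r0 z))"
proof -
  define f where "f i = (if i < ew then r0 + ew + i else i - ew)" for i
  have B: "definable (r0 + ew + ew) (\<lambda>n J c z. (\<lambda>y. G n J c (take ew y) (drop ew y)) (map (\<lambda>i. z ! f i) [0..<ew + r0]))"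
    by (rule fo_definable_reindex[OF A]) (auto simp: f_def)
  show ?thesis
  proof (rule fo_definable_cong[OF B])
    fix n J c and z :: "nat list" assume h: "length z = r0 + ew + ew"
    have M: "map (\<lambda>i. z ! f i) [0..<ew + r0] = drop (r0 + ew) z @ take r0 z"
      by (rule nth_equalityI) (use h in \<open>auto simp: f_def nth_append add.commute\<close>)
    show "(\<lambda>y. G n J c (take ew y) (drop ew y)) (map (\<lambda>i. z ! f i) [0..<ew + r0]) =
          G n J c (drop (r0 + ew) z) (take r0 z)"
      unfolding M using h by simp
  qed
qed

lemma definable_via_successor:
  fixes Gp :: "nat \<Rightarrow> ((nat + nat) \<Rightarrow> nat list set) \<Rightarrow> (nat \<Rightarrow> nat) \<Rightarrow> nat list \<Rightarrow> nat list \<Rightarrow> bool"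
    and Go :: "nat \<Rightarrow> nat \<Rightarrow> ((nat + nat) \<Rightarrow> nat list set) \<Rightarrow> (nat \<Rightarrow> nat) \<Rightarrow> nat list \<Rightarrow> nat list \<Rightarrow> bool"
  assumes a: "a < m"
    and Gp: "definable (ew + r0) (\<lambda>n J c y. Gp n J c (take ew y) (drop ew y))"
    and Go: "\<And>b. b < m \<Longrightarrow> definable (ew + r0) (\<lambda>n J c y. Go b n J c (take ew y) (drop ew y))"
  shows "definable (r0 + ew) (\<lambda>n J c x.
    (\<exists>u'\<in>tuples n ew. drop r0 x @ u' \<in> J (Inr (to_nat (Prepend a))) \<and> Gp n J c u' (take r0 x)) \<or>
    (\<exists>b<m. \<exists>u'\<in>tuples n ew. drop r0 x @ u' \<in> J (Inr (to_nat (Overflow a b))) \<and> Go b n J c u' (take r0 x)))"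
proof -
  have P1: "definable (r0 + ew) (\<lambda>n J c x. \<exists>u'. length u' = ew \<and> set u' \<subseteq> {..<n} \<and>
      (drop r0 (x @ u') \<in> J (Inr (to_nat (Prepend a))) \<and> Gp n J c (drop (r0 + ew) (x @ u')) (take r0 (x @ u'))))"
    by (rule fo_definable_ex_tuple[OF fo_definable_and[OF definable_link_atom definable_swap_blocks[OF Gp]]])
      (use a in \<open>simp add: aux_arity_def\<close>)
  have P2: "definable (r0 + ew) (\<lambda>n J c x. \<exists>b\<in>{..<m}. \<exists>u'. length u' = ew \<and> set u' \<subseteq> {..<n} \<and>
      (drop r0 (x @ u') \<in> J (Inr (to_nat (Overflow a b))) \<and> Go b n J c (drop (r0 + ew) (x @ u')) (take r0 (x @ u'))))"
  proof (rule fo_definable_bex_finite, simp, rule ballI)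
    fix b assume "b \<in> {..<m}"
    then have b: "b < m" by simp
    show "definable (r0 + ew) (\<lambda>n J c x. \<exists>u'. length u' = ew \<and> set u' \<subseteq> {..<n} \<and>
      (drop r0 (x @ u') \<in> J (Inr (to_nat (Overflow a b))) \<and> Go b n J c (drop (r0 + ew) (x @ u')) (take r0 (x @ u'))))"
      by (rule fo_definable_ex_tuple[OF fo_definable_and[OF definable_link_atom definable_swap_blocks[OF Go[OF b]]]])
        (use a b in \<open>simp add: aux_arity_def\<close>)
  qed
  from fo_definable_or[OF P1 P2] show ?thesis
  proof (rule fo_definable_cong, goal_cases)
    case (1 n J c x)
    then show ?case by (simp add: tuples_def Bex_def conj_assoc)
  qed
qed

lemma definable_updated_WordDb:
  assumes a: "a < m" and R: "srel S R = Some r0"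
  shows "definable (r0 + ew) (updated a (WordDb R))"
proof -
  have "definable (r0 + ew) (\<lambda>n J c x.
      (\<exists>u'\<in>tuples n ew. drop r0 x @ u' \<in> J (Inr (to_nat (Prepend a))) \<and> take r0 x \<in> stored_db J u' R) \<or>
      (\<exists>b<m. \<exists>u'\<in>tuples n ew. drop r0 x @ u' \<in> J (Inr (to_nat (Overflow a b))) \<and> take r0 x \<in> stored_db_after n c b J u' R))"
    by (rule definable_via_successor[where Gp="\<lambda>n J c u t. t \<in> stored_db J u R"
          and Go="\<lambda>b n J c u t. t \<in> stored_db_after n c b J u R",
          OF a definable_stored_db[OF R] definable_stored_db_after[OF _ R]])
  then show ?thesis
  proof (rule fo_definable_cong, goal_cases)
    case (1 n J c x)
    have "drop r0 x \<in> tuples n ew" using 1(4,5) set_drop_subset[of r0 x] by (auto simp: tuples_def)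
    from updated_WordDb_iff[OF 1(1,2) a R this, of "take r0 x"] show ?case by (simp add: updated_def)
  qed
qed

lemma definable_updated_WordGates:
  assumes a: "a < m"
  shows "definable (gw + ew) (updated a WordGates)"
proof -
  have "definable (ew + gw) (\<lambda>n J c y.
      (gstep Cc S n (stored_db J (take ew y)) c ^^ layers) (stored_gates J (take ew y)) (drop ew y))"
    by (rule definable_gstep_funpow[where Dof="\<lambda>n J c u. stored_db J u" and Pof="\<lambda>n J c u g. stored_gates J u g"])
      (use definable_stored_db definable_stored_gates in simp_all)
  moreover have "definable (ew + gw) (\<lambda>n J c y.
      (gstep Cc S n (stored_db_after n c b J (take ew y)) c ^^ layers) (\<lambda>_. False) (drop ew y))" if b: "b < m" for b
    by (rule definable_gstep_funpow[where Dof="\<lambda>n J c u. stored_db_after n c b J u" and Pof="\<lambda>n J c u g. False"])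
      (use definable_stored_db_after[OF b] fo_definable_false in simp_all)
  ultimately have "definable (gw + ew) (\<lambda>n J c x.
      (\<exists>u'\<in>tuples n ew. drop gw x @ u' \<in> J (Inr (to_nat (Prepend a))) \<and>
        (gstep Cc S n (stored_db J u') c ^^ layers) (stored_gates J u') (take gw x)) \<or>
      (\<exists>b<m. \<exists>u'\<in>tuples n ew. drop gw x @ u' \<in> J (Inr (to_nat (Overflow a b))) \<and>
        (gstep Cc S n (stored_db_after n c b J u') c ^^ layers) (\<lambda>_. False) (take gw x)))"
    by (rule definable_via_successor[where Gp="\<lambda>n J c u g. (gstep Cc S n (stored_db J u) c ^^ layers) (stored_gates J u) g"
          and Go="\<lambda>b n J c u g. (gstep Cc S n (stored_db_after n c b J u) c ^^ layers) (\<lambda>_. False) g", OF a])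
  then show ?thesis
  proof (rule fo_definable_cong, goal_cases)
    case (1 n J c x)
    have "drop gw x \<in> tuples n ew" using 1(4,5) set_drop_subset[of gw x] by (auto simp: tuples_def)
    moreover have "take gw x \<in> tuples n gw" using 1(4,5) set_take_subset[of gw x] by (auto simp: tuples_def)
    ultimately show ?case using updated_WordGates_iff[OF 1(1,2) a, of "drop gw x" "take gw x"] by (simp add: updated_def)
  qed
qed

lemma WordGates_Nil_mem:
  assumes n: "0 < n" and g: "g \<in> tuples n gw"
  shows "g @ code n [] \<in> intended n c K WordGates \<longleftrightarrow> gvals Cc S n c K (layers * (floor_log n + 1)) g"
proof -
  have "g @ code n [] \<in> intended n c K WordGates \<longleftrightarrow> (\<exists>v\<in>words n. code n [] = code n v \<and> g \<in> tuples n gw \<and>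
      gvals Cc S n c (run n c v K) (layers * (floor_log n - length v + 1)) g)"
    by (rule WordGates_mem[OF n length_code[OF n Nil_in_words]])
  also have "\<dots> \<longleftrightarrow> gvals Cc S n c K (layers * (floor_log n + 1)) g"
    using code_eq_iff[OF n Nil_in_words] Nil_in_words g by (auto simp: run_def)
  finally show ?thesis .
qed

lemma updated_QueryRel_iff:
  assumes V: "consistent n J c" and n: "0 < n" and a: "a < m" and x: "x \<in> tuples n kq"
  shows "updated a QueryRel n J c x \<longleftrightarrow> updated a WordGates n J c (x @ replicate (gw - kq) 0 @ code n [])"
proof -
  define I' where "I' = apply_rq S n (\<lambda>R. J (Inl R)) c (chs ! a) []"
  define g where "g = x @ replicate (gw - kq) 0"
  have db: "is_db S n I' c"
    unfolding I'_def by (rule is_db_apply_rq[OF conjunct1[OF rq_ok_chs_nth[OF a]] consistent_is_db[OF V]])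
  have g_tuple: "g \<in> tuples n gw" using x kq_le n by (auto simp: tuples_def g_def)
  have "updated a QueryRel n J c x \<longleftrightarrow> x \<in> q n I' c" by (simp add: updated_def intended_simps(1) I'_def)
  also have "\<dots> \<longleftrightarrow> gvals Cc S n c I' (layers * (floor_log n + 1)) g"
    unfolding g_def by (rule mem_q_iff_gvals[OF n db x])
  also have "\<dots> \<longleftrightarrow> updated a WordGates n J c (g @ code n [])"
    unfolding updated_def I'_def[symmetric] by (rule WordGates_Nil_mem[OF n g_tuple, symmetric])
  finally show ?thesis by (simp add: g_def)
qed

text \<open>The padding with 0 is expressed by the least element of the order.\<close>

lemma definable_updated_QueryRel:
  assumes a: "a < m"
  shows "definable kq (updated a QueryRel)"
proof -
  define N where "N = kq + Suc ew"
  define f where "f i = (if i < kq then i else if i < gw then kq else kq + 1 + (i - gw))" for i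
  have TV: "definable N (\<lambda>n J c z. updated a WordGates n J c (map (\<lambda>i. z ! f i) [0..<gw + ew]))"
    by (rule fo_definable_reindex[OF definable_updated_WordGates[OF a]]) (auto simp: f_def N_def)
  have E: "definable N (\<lambda>n J c z. map (\<lambda>i. z ! i) [Suc kq..<Suc kq + ew] \<in> J (Inr (to_nat EmptyCode)))"
    by (rule definable_aux_atom) (auto simp: aux_arity_def N_def)
  have "definable (Suc N) (\<lambda>n J c y. y ! kq \<le> y ! N)" by (rule fo_definable_var_le) (auto simp: N_def)
  from fo_definable_all[OF this] have MZ: "definable N (\<lambda>n J c z. \<forall>b<n. z ! kq \<le> b)"
    by (rule fo_definable_cong) (simp add: nth_append N_def)
  have ALL: "definable kq (\<lambda>n J c x. \<exists>zz. length zz = Suc ew \<and> set zz \<subseteq> {..<n} \<and>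
      ((\<forall>b<n. (x @ zz) ! kq \<le> b) \<and> map (\<lambda>i. (x @ zz) ! i) [Suc kq..<Suc kq + ew] \<in> J (Inr (to_nat EmptyCode)) \<and>
       updated a WordGates n J c (map (\<lambda>i. (x @ zz) ! f i) [0..<gw + ew])))"
    by (rule fo_definable_ex_tuple) (use fo_definable_and[OF MZ fo_definable_and[OF E TV]] in \<open>simp only: N_def\<close>)
  show ?thesis
  proof (rule fo_definable_cong[OF ALL], goal_cases)
    case (1 n J c x)
    have x: "x \<in> tuples n kq" using 1 by (simp add: tuples_def)
    have emp: "J (Inr (to_nat EmptyCode)) = {code n []}"
      using consistent_aux[OF 1(1), of EmptyCode] by (simp add: aux_arity_def intended_simps(3))
    have encl: "length (code n []) = ew" by (rule length_code[OF 1(2) Nil_in_words])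
    have enct: "code n [] \<in> tuples n ew" by (rule code_in_tuples[OF 1(2) Nil_in_words])
    have mp: "\<And>z0 u. length u = ew \<Longrightarrow> map (\<lambda>i. (x @ z0 # u) ! f i) [0..<gw + ew] = x @ replicate (gw - kq) z0 @ u"
      by (rule nth_equalityI) (use 1(4) kq_le in \<open>auto simp: f_def nth_append nth_Cons'\<close>)
    have mu: "\<And>z0 u. length u = ew \<Longrightarrow> map (\<lambda>i. (x @ z0 # u) ! i) [Suc kq..<Suc kq + ew] = u"
      by (rule nth_equalityI) (use 1(4) in \<open>auto simp: nth_append intro!: arg_cong[where f="(!) _"]\<close>)
    have mk: "\<And>z0 u. (x @ z0 # u) ! kq = z0" using 1(4) by (simp add: nth_append)
    note Q = updated_QueryRel_iff[OF 1(1,2) a x]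
    show ?case (is "?L \<longleftrightarrow> ?R")
    proof
      assume ?L
      then obtain zz where zz: "length zz = Suc ew" "\<forall>b<n. (x @ zz) ! kq \<le> b"
        "map (\<lambda>i. (x @ zz) ! i) [Suc kq..<Suc kq + ew] \<in> J (Inr (to_nat EmptyCode))"
        "updated a WordGates n J c (map (\<lambda>i. (x @ zz) ! f i) [0..<gw + ew])" by blast
      then obtain z0 u where zu: "zz = z0 # u" "length u = ew" by (cases zz) auto
      have "z0 = 0" using zz(2) 1(2) unfolding zu mk by auto
      moreover have "u = code n []" using zz(3) emp unfolding zu mu[OF zu(2)] by simp
      ultimately show ?R using zz(4) Q unfolding zu mp[OF zu(2)] by simp
    next
      assume ?R
      then have "updated a WordGates n J c (map (\<lambda>i. (x @ 0 # code n []) ! f i) [0..<gw + ew])"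
        using Q unfolding mp[OF encl] by simp
      moreover have "map (\<lambda>i. (x @ 0 # code n []) ! i) [Suc kq..<Suc kq + ew] \<in> J (Inr (to_nat EmptyCode))"
        unfolding mu[OF encl] emp by simp
      moreover have "\<forall>b<n. (x @ 0 # code n []) ! kq \<le> b" unfolding mk by simp
      moreover have "length (0 # code n []) = Suc ew" "set (0 # code n []) \<subseteq> {..<n}"
        using encl enct 1(2) by (auto simp: tuples_def)
      ultimately show ?L by (intro exI[of _ "0 # code n []"] conjI)
    qed
  qed
qed

lemma definable_updated:
  assumes a: "a < m" and r: "aux_arity X = Some r"
  shows "definable r (updated a X)"
proof (cases X)
  case QueryRel then show ?thesis using r definable_updated_QueryRel[OF a] by (simp add: aux_arity_def)
next
  case BitRel then show ?thesis using r by (intro definable_updated_static) auto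
next
  case EmptyCode then show ?thesis using r by (intro definable_updated_static) auto
next
  case (Prepend b) then show ?thesis using r by (intro definable_updated_static) auto
next
  case (Overflow b b')
  have "X \<in> range (\<lambda>(a, b). Overflow a b)" using Overflow by (auto intro: range_eqI[of _ _ "(b, b')"])
  then show ?thesis using r by (intro definable_updated_static) auto
next
  case (WordDb R)
  then obtain r0 where r0: "srel S R = Some r0" "r = r0 + ew" using r by (auto simp: aux_arity_def)
  show ?thesis using definable_updated_WordDb[OF a r0(1)] WordDb r0(2) by simp
next
  case WordGates then show ?thesis using r definable_updated_WordGates[OF a] by (simp add: aux_arity_def)
qed

lemma intended_subset_tuples:
  assumes n: "0 < n" and db: "is_db S n I c" and r: "aux_arity X = Some r"
  shows "intended n c I X \<subseteq> tuples n r"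
proof (cases X)
  case QueryRel then show ?thesis using r qrep[OF n db] by (auto simp: aux_arity_def intended_simps)
next
  case BitRel then show ?thesis using r by (auto simp: aux_arity_def intended_simps tuples_def)
next
  case EmptyCode then show ?thesis using r code_in_tuples[OF n Nil_in_words] by (auto simp: aux_arity_def intended_simps)
next
  case (Prepend b)
  then have b: "b < m" "r = ew + ew" using r by (auto simp: aux_arity_def split: if_splits)
  show ?thesis unfolding Prepend intended_simps(4)[OF b(1)] b(2)
    using code_in_tuples[OF n] Cons_in_words[OF b(1)] by (auto intro!: append_in_tuples)
next
  case (Overflow b b')
  then have b: "b < m" "b' < m" "r = ew + ew" using r by (auto simp: aux_arity_def split: if_splits)
  show ?thesis unfolding Overflow intended_simps(5)[OF b(1,2)] b(3)
  proof
    fix x assume "x \<in> {code n v @ code n (butlast (b # v)) | v. v \<in> words n \<and> length v = floor_log n \<and> last (b # v) = b'}"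
    then obtain v where v: "x = code n v @ code n (butlast (b # v))" "v \<in> words n" by blast
    have "code n (butlast (b # v)) \<in> tuples n ew" by (rule code_in_tuples[OF n butlast_Cons_in_words[OF b(1) v(2)]])
    then show "x \<in> tuples n (ew + ew)" unfolding v(1) by (intro append_in_tuples code_in_tuples[OF n v(2)])
  qed
next
  case (WordDb R)
  then obtain r0 where r0: "srel S R = Some r0" "r = r0 + ew" using r by (auto simp: aux_arity_def)
  have "run n c v I R \<subseteq> tuples n r0" if "v \<in> words n" for v
    using is_db_run[OF db words_letters[OF that]] r0(1) unfolding is_db_def by (metis option.simps(5))
  note FWt = this
  have sr: "srel S R \<noteq> None" using r0(1) by simp
  show ?thesis unfolding WordDb intended_simps(6)[OF sr] r0(2)
  proof
    fix x assume "x \<in> {t @ code n v | t v. v \<in> words n \<and> t \<in> run n c v I R}"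
    then obtain t v where v: "x = t @ code n v" "v \<in> words n" "t \<in> run n c v I R" by blast
    show "x \<in> tuples n (r0 + ew)" unfolding v(1)
      by (intro append_in_tuples code_in_tuples[OF n v(2)] subsetD[OF FWt[OF v(2)] v(3)])
  qed
next
  case WordGates
  then have rr: "r = gw + ew" using r by (simp add: aux_arity_def)
  show ?thesis unfolding WordGates intended_simps(7) rr using code_in_tuples[OF n] by (auto intro!: append_in_tuples)
qed

definition chs_index :: "rq \<Rightarrow> nat" where "chs_index \<rho> = (SOME a. a < m \<and> chs ! a = \<rho>)"

lemma chs_index_spec: "\<rho> \<in> \<Delta> \<Longrightarrow> chs_index \<rho> < m \<and> chs ! chs_index \<rho> = \<rho>"
proof -
  assume "\<rho> \<in> \<Delta>"
  then have "\<rho> \<in> set chs" using chs by simp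
  then obtain i where i: "i < m" "chs ! i = \<rho>" by (auto simp: in_set_conv_nth)
  show "chs_index \<rho> < m \<and> chs ! chs_index \<rho> = \<rho>" unfolding chs_index_def by (rule someI[of _ i]) (use i in simp)
qed

definition defines_update :: "rq \<Rightarrow> nat \<Rightarrow> nat \<Rightarrow> (nat + nat) fo \<Rightarrow> bool" where
  "defines_update \<rho> T r \<phi> \<longleftrightarrow> fo_wf prog_arity (scst S) False \<phi> \<and> fvs \<phi> \<subseteq> {..<r} \<and>
     (\<forall>n J c x. consistent n J c \<longrightarrow> 0 < n \<longrightarrow> (\<forall>k\<in>scst S. c k < n) \<longrightarrow> length x = r \<longrightarrow> set x \<subseteq> {..<n} \<longrightarrow>
        sat n J c (\<lambda>i. x ! i) \<phi> = updated (chs_index \<rho>) (from_nat T) n J c x)"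

definition update_formula :: "rq \<Rightarrow> nat \<Rightarrow> (nat + nat) fo" where
  "update_formula \<rho> T = (SOME \<phi>. defines_update \<rho> T (the (aux_arity_nat T)) \<phi>)"

lemma update_formula_defines:
  assumes \<rho>: "\<rho> \<in> \<Delta>" and T: "aux_arity_nat T = Some r"
  shows "defines_update \<rho> T r (update_formula \<rho> T)"
proof -
  have Tr: "T \<in> range (to_nat :: aux_sym \<Rightarrow> nat)" using T by (simp add: aux_arity_nat_def split: if_splits)
  then obtain X :: aux_sym where X: "T = to_nat X" by blast
  have aX: "aux_arity X = Some r" using T X by simp
  have "definable r (updated (chs_index \<rho>) X)" by (rule definable_updated[OF conjunct1[OF chs_index_spec[OF \<rho>]] aX])
  then have "\<exists>\<phi>. defines_update \<rho> T r \<phi>" unfolding fo_definable_def defines_update_def X by simp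
  then show ?thesis unfolding update_formula_def using T by (simp add: someI_ex)
qed

definition prog :: dynprog where "prog = \<lparr>auxar = aux_arity_nat, upd = update_formula, qsym = to_nat QueryRel\<rparr>"

definition init_aux :: "nat \<Rightarrow> (nat \<Rightarrow> nat) \<Rightarrow> nat \<Rightarrow> nat list set" where
  "init_aux n c T = (if T \<in> range (to_nat :: aux_sym \<Rightarrow> nat) then intended n c (\<lambda>_. {}) (from_nat T) else {})"

lemma finite_aux_arity_dom: "finite {X. aux_arity X \<noteq> None}"
proof -
  have "{X. aux_arity X \<noteq> None} \<subseteq> {QueryRel, BitRel, EmptyCode, WordGates} \<union> Prepend ` {..<m} \<union> (\<lambda>(a, b). Overflow a b) ` ({..<m} \<times> {..<m})
        \<union> WordDb ` dom (srel S)"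
  proof
    fix X assume "X \<in> {X. aux_arity X \<noteq> None}"
    then show "X \<in> {QueryRel, BitRel, EmptyCode, WordGates} \<union> Prepend ` {..<m} \<union> (\<lambda>(a, b). Overflow a b) ` ({..<m} \<times> {..<m}) \<union> WordDb ` dom (srel S)"
      by (cases X) (auto simp: aux_arity_def split: if_splits)
  qed
  moreover have "finite ({QueryRel, BitRel, EmptyCode, WordGates} \<union> Prepend ` {..<m} \<union> (\<lambda>(a, b). Overflow a b) ` ({..<m} \<times> {..<m})
        \<union> WordDb ` dom (srel S))" using fin_srel by simp
  ultimately show ?thesis by (rule finite_subset)
qed

lemma prog_wf: "prog_ok S kq \<Delta> prog"
proof -
  have "dom aux_arity_nat \<subseteq> to_nat ` {X. aux_arity X \<noteq> None}"
    by (auto simp: aux_arity_nat_def split: if_splits)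
  then have "finite (dom aux_arity_nat)" using finite_aux_arity_dom finite_subset by blast
  moreover have "\<forall>\<rho>\<in>\<Delta>. \<forall>T r. aux_arity_nat T = Some r \<longrightarrow>
        fo_wf (case_sum (srel S) aux_arity_nat) (scst S) False (update_formula \<rho> T) \<and> fvs (update_formula \<rho> T) \<subseteq> {..< rpar \<rho> + r}"
    using update_formula_defines rqok unfolding defines_update_def by auto
  ultimately show ?thesis unfolding prog_ok_def prog_def by (simp add: aux_arity_def)
qed

lemma consistent_init:
  assumes "\<forall>j\<in>scst S. c j < n"
  shows "consistent n (case_sum (\<lambda>_. {}) (init_aux n c)) c"
  using assms unfolding consistent_def is_db_def init_aux_def by (auto split: option.splits)

lemma consistent_step:
  assumes V: "consistent n (case_sum I A) c" and n: "0 < n" and \<rho>: "\<rho> \<in> \<Delta>" and a: "a \<in> tuples n (rpar \<rho>)"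
    and cs: "\<forall>j\<in>scst S. c j < n"
  shows "consistent n (case_sum (fst (step S prog n c (\<rho>, a) (I, A))) (snd (step S prog n c (\<rho>, a) (I, A)))) c"
proof -
  have a0: "a = []" using a rqok[OF \<rho>] by (simp add: tuples_def)
  define I' where "I' = apply_rq S n I c \<rho> []"
  have dbI: "is_db S n I c" using consistent_is_db[OF V] by simp
  have dbI': "is_db S n I' c" unfolding I'_def using is_db_apply_rq rqok[OF \<rho>] dbI by blast
  have id: "chs_index \<rho> < m" "chs ! chs_index \<rho> = \<rho>" using chs_index_spec[OF \<rho>] by auto
  have aux: "snd (step S prog n c (\<rho>, a) (I, A)) (to_nat X) = intended n c I' X" if X: "aux_arity X = Some r" for X r
  proof -
    have g: "defines_update \<rho> (to_nat X) r (update_formula \<rho> (to_nat X))" using update_formula_defines[OF \<rho>] X by simp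
    have "snd (step S prog n c (\<rho>, a) (I, A)) (to_nat X) =
          {b \<in> tuples n r. sat n (case_sum I A) c (\<lambda>i. b ! i) (update_formula \<rho> (to_nat X))}"
      using X by (simp add: step_def prog_def a0)
    also have "\<dots> = {b \<in> tuples n r. b \<in> intended n c I' X}"
      using g V n cs unfolding defines_update_def updated_def I'_def by (auto simp: tuples_def id)
    also have "\<dots> = intended n c I' X" using intended_subset_tuples[OF n dbI' X] by blast
    finally show ?thesis .
  qed
  have fst: "fst (step S prog n c (\<rho>, a) (I, A)) = I'" by (simp add: step_def I'_def a0)
  show ?thesis unfolding consistent_def using dbI' aux by (auto simp: fst)
qed

lemma consistent_fold:
  assumes "consistent n (case_sum I A) c" "0 < n" "\<forall>j\<in>scst S. c j < n"
    "\<forall>(\<rho>, a)\<in>set \<alpha>. \<rho> \<in> \<Delta> \<and> a \<in> tuples n (rpar \<rho>)"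
  shows "consistent n (case_sum (fst (fold (step S prog n c) \<alpha> (I, A))) (snd (fold (step S prog n c) \<alpha> (I, A)))) c"
  using assms
proof (induction \<alpha> arbitrary: I A)
  case Nil then show ?case by simp
next
  case (Cons ch \<alpha>)
  obtain \<rho> a where ch: "ch = (\<rho>, a)" by (cases ch)
  obtain I' A' where st: "step S prog n c (\<rho>, a) (I, A) = (I', A')" by (cases "step S prog n c (\<rho>, a) (I, A)")
  have "consistent n (case_sum I' A') c" using consistent_step[OF Cons.prems(1,2), of \<rho> a] Cons.prems(3,4) ch st by simp
  then have "consistent n (case_sum (fst (fold (step S prog n c) \<alpha> (I', A'))) (snd (fold (step S prog n c) \<alpha> (I', A')))) c"
    using Cons.IH[of I' A'] Cons.prems ch by simp
  moreover have "fold (step S prog n c) (ch # \<alpha>) (I, A) = fold (step S prog n c) \<alpha> (I', A')" using ch st by simp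
  ultimately show ?case by (simp only:)
qed

lemma dynfo_init_q: "dynfo_init S kq q \<Delta>"
  unfolding dynfo_init_def
proof (intro exI[of _ prog] exI[of _ init_aux] conjI prog_wf allI impI)
  fix n c \<alpha> assume n: "0 < n" and cs: "\<forall>j\<in>scst S. c j < n" and "\<alpha> \<noteq> []"
    and al: "\<forall>(\<rho>, a)\<in>set \<alpha>. \<rho> \<in> \<Delta> \<and> a \<in> tuples n (rpar \<rho>)"
  define st where "st = fold (step S prog n c) \<alpha> ((\<lambda>_. {}), init_aux n c)"
  have V: "consistent n (case_sum (fst st) (snd st)) c"
    unfolding st_def by (rule consistent_fold[OF consistent_init[OF cs] n cs al])
  have "snd st (to_nat QueryRel) = intended n c (fst st) QueryRel" using consistent_aux[OF V, of QueryRel] by (simp add: aux_arity_def)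
  then show "let st = fold (step S prog n c) \<alpha> ((\<lambda>_. {}), init_aux n c) in snd st (qsym prog) = q n (fst st) c"
    unfolding st_def[symmetric] Let_def by (simp add: prog_def intended_simps(1))
qed

end

theorem theorem5p1:
  fixes S :: schema and k :: nat
    and q :: "nat \<Rightarrow> (nat \<Rightarrow> nat list set) \<Rightarrow> (nat \<Rightarrow> nat) \<Rightarrow> nat list set"
    and \<Delta> :: "rq set"
  assumes "schema_ok S"
    and "AC1_query S k q"
    and "finite \<Delta>"
    and "\<forall>\<rho>\<in>\<Delta>. rq_ok S \<rho> \<and> rpar \<rho> = 0"
  shows "dynfo_init S k q \<Delta>"
proof -
  obtain Cc where "circ_ok S k Cc" and "\<forall>n>0. \<forall>I c. is_db S n I c \<longrightarrow>
      q n I c = {a \<in> tuples n k. gval Cc S n I c (dbound Cc n) (a @ replicate (cw Cc - k) 0)}"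
    using assms(2) unfolding AC1_query_def by blast
  moreover obtain chs where "set chs = \<Delta>" using finite_list[OF assms(3)] by blast
  ultimately have "ac1_dyn S k q \<Delta> Cc chs"
    using assms(1,4) by unfold_locales blast+
  then show ?thesis by (rule ac1_dyn.dynfo_init_q)
qed

end
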